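(* Let $\mathbf{k}$ be a field, $Q$ a finite connected quiver, $\Lambda=\mathbf{k}Q/\mathcal{J}^2$ ($\mathcal{J}$ the arrow ideal), $n\ge2$, and assume $\mathcal{C}\subseteq\operatorname{mod}\Lambda$ is an $n$-cluster tilting subcategory. Then for every arrow $v\to u$ in $Q$ we have $\delta^+(v)+\delta^-(u)\le3$.
   Context: Modules are finite-dimensional right modules. $\mathcal{C}$ is $n$-cluster tilting if it is functorially finite and $\mathcal{C}=\{X\mid \operatorname{Ext}^i(X,\mathcal{C})=0\ \forall 0<i<n\}=\{X\mid\operatorname{Ext}^i(\mathcal{C},X)=0\ \forall 0<i<n\}$. $\delta^-(v)$, $\delta^+(v)$ are the numbers of arrows ending, resp. starting, at $v$. *)

theory Defs
  imports "Jordan_Normal_Form.Matrix"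
begin

text \<open>Finite quivers and finite-dimensional representations of Q bound by the
  relations J^2 = 0 (all paths of length 2 vanish), i.e. modules over kQ/J^2,
  with vector spaces given in coordinates k^d.\<close>

record ('v, 'a) quiver =
  verts :: "'v set"
  arrs  :: "'a set"
  src   :: "'a \<Rightarrow> 'v"
  tgt   :: "'a \<Rightarrow> 'v"

definition finite_quiver :: "('v, 'a) quiver \<Rightarrow> bool" where
  "finite_quiver Q \<longleftrightarrow> finite (verts Q) \<and> finite (arrs Q) \<and>
     (\<forall>a\<in>arrs Q. src Q a \<in> verts Q \<and> tgt Q a \<in> verts Q)"

definition quiver_connected :: "('v, 'a) quiver \<Rightarrow> bool" where
  "quiver_connected Q \<longleftrightarrow> verts Q \<noteq> {} \<and>
     (\<forall>x\<in>verts Q. \<forall>y\<in>verts Q.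
        (x, y) \<in> (let E = {(src Q a, tgt Q a) | a. a \<in> arrs Q} in (E \<union> E\<inverse>)\<^sup>*))"

definition out_deg :: "('v, 'a) quiver \<Rightarrow> 'v \<Rightarrow> nat" where
  "out_deg Q v = card {a \<in> arrs Q. src Q a = v}"

definition in_deg :: "('v, 'a) quiver \<Rightarrow> 'v \<Rightarrow> nat" where
  "in_deg Q v = card {a \<in> arrs Q. tgt Q a = v}"

record ('v, 'a, 'k) rep =
  rdim :: "'v \<Rightarrow> nat"
  rmap :: "'a \<Rightarrow> 'k mat"

definition is_rep :: "('v, 'a) quiver \<Rightarrow> ('v, 'a, 'k::field) rep \<Rightarrow> bool" where
  "is_rep Q X \<longleftrightarrow>
     (\<forall>a\<in>arrs Q. rmap X a \<in> carrier_mat (rdim X (tgt Q a)) (rdim X (src Q a))) \<and>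
     (\<forall>a\<in>arrs Q. \<forall>b\<in>arrs Q. tgt Q a = src Q b \<longrightarrow>
        rmap X b * rmap X a = 0\<^sub>m (rdim X (tgt Q b)) (rdim X (src Q a)))"

definition is_hom :: "('v, 'a) quiver \<Rightarrow> ('v, 'a, 'k::field) rep \<Rightarrow> ('v, 'a, 'k) rep
    \<Rightarrow> ('v \<Rightarrow> 'k mat) \<Rightarrow> bool" where
  "is_hom Q X Y f \<longleftrightarrow>
     (\<forall>v\<in>verts Q. f v \<in> carrier_mat (rdim Y v) (rdim X v)) \<and>
     (\<forall>a\<in>arrs Q. f (tgt Q a) * rmap X a = rmap Y a * f (src Q a))"

definition hom_comp :: "('v \<Rightarrow> 'k::field mat) \<Rightarrow> ('v \<Rightarrow> 'k mat) \<Rightarrow> ('v \<Rightarrow> 'k mat)" where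
  "hom_comp g f = (\<lambda>v. g v * f v)"

definition hom_eq :: "('v, 'a) quiver \<Rightarrow> ('v \<Rightarrow> 'k mat) \<Rightarrow> ('v \<Rightarrow> 'k mat) \<Rightarrow> bool" where
  "hom_eq Q f g \<longleftrightarrow> (\<forall>v\<in>verts Q. f v = g v)"

definition hom_id :: "('v, 'a, 'k::field) rep \<Rightarrow> ('v \<Rightarrow> 'k mat)" where
  "hom_id X = (\<lambda>v. 1\<^sub>m (rdim X v))"

definition hom_injective :: "('v, 'a) quiver \<Rightarrow> ('v, 'a, 'k::field) rep \<Rightarrow> ('v \<Rightarrow> 'k mat) \<Rightarrow> bool" where
  "hom_injective Q X f \<longleftrightarrow>
     (\<forall>v\<in>verts Q. \<forall>x\<in>carrier_vec (rdim X v). f v *\<^sub>v x = 0\<^sub>v (dim_row (f v)) \<longrightarrow> x = 0\<^sub>v (rdim X v))"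

definition hom_surjective :: "('v, 'a) quiver \<Rightarrow> ('v, 'a, 'k::field) rep \<Rightarrow> ('v, 'a, 'k) rep
    \<Rightarrow> ('v \<Rightarrow> 'k mat) \<Rightarrow> bool" where
  "hom_surjective Q X Y f \<longleftrightarrow>
     (\<forall>v\<in>verts Q. \<forall>y\<in>carrier_vec (rdim Y v). \<exists>x\<in>carrier_vec (rdim X v). f v *\<^sub>v x = y)"

definition ses :: "('v, 'a) quiver \<Rightarrow> ('v, 'a, 'k::field) rep \<Rightarrow> ('v, 'a, 'k) rep \<Rightarrow> ('v, 'a, 'k) rep
    \<Rightarrow> ('v \<Rightarrow> 'k mat) \<Rightarrow> ('v \<Rightarrow> 'k mat) \<Rightarrow> bool" where
  "ses Q X E Z f g \<longleftrightarrow>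
     is_rep Q X \<and> is_rep Q E \<and> is_rep Q Z \<and> is_hom Q X E f \<and> is_hom Q E Z g \<and>
     hom_injective Q X f \<and> hom_surjective Q E Z g \<and>
     (\<forall>v\<in>verts Q. \<forall>y\<in>carrier_vec (rdim E v).
        g v *\<^sub>v y = 0\<^sub>v (rdim Z v) \<longleftrightarrow> (\<exists>x\<in>carrier_vec (rdim X v). f v *\<^sub>v x = y))"

definition is_projective :: "('v, 'a) quiver \<Rightarrow> ('v, 'a, 'k::field) rep \<Rightarrow> bool" where
  "is_projective Q P \<longleftrightarrow> is_rep Q P \<and>
     (\<forall>X Y g h. is_rep Q X \<and> is_rep Q Y \<and> is_hom Q X Y g \<and> hom_surjective Q X Y g \<and>
        is_hom Q P Y h \<longrightarrow> (\<exists>h'. is_hom Q P X h' \<and> hom_eq Q (hom_comp g h') h))"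

definition ext1_zero :: "('v, 'a) quiver \<Rightarrow> ('v, 'a, 'k::field) rep \<Rightarrow> ('v, 'a, 'k) rep \<Rightarrow> bool" where
  "ext1_zero Q Z X \<longleftrightarrow>
     (\<forall>E f g. ses Q X E Z f g \<longrightarrow>
        (\<exists>s. is_hom Q Z E s \<and> hom_eq Q (hom_comp g s) (hom_id Z)))"

text \<open>ext_zero Q i Z X means Ext^i(Z,X) = 0, computed by dimension shifting:
  Ext^(i+1)(Z,X) = Ext^i(K,X) for any 0 -> K -> P -> Z -> 0 with P projective (i >= 1).
  Ext^0 = Hom.\<close>
fun ext_zero :: "('v, 'a) quiver \<Rightarrow> nat \<Rightarrow> ('v, 'a, 'k::field) rep \<Rightarrow> ('v, 'a, 'k) rep \<Rightarrow> bool" where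
  "ext_zero Q 0 Z X \<longleftrightarrow>
     (\<forall>f. is_hom Q Z X f \<longrightarrow> (\<forall>v\<in>verts Q. f v = 0\<^sub>m (rdim X v) (rdim Z v)))"
| "ext_zero Q (Suc 0) Z X \<longleftrightarrow> ext1_zero Q Z X"
| "ext_zero Q (Suc (Suc i)) Z X \<longleftrightarrow>
     (\<exists>K P f g. is_projective Q P \<and> ses Q K P Z f g \<and> ext_zero Q (Suc i) K X)"

definition contravariantly_finite :: "('v, 'a) quiver \<Rightarrow> ('v, 'a, 'k::field) rep set \<Rightarrow> bool" where
  "contravariantly_finite Q \<C> \<longleftrightarrow>
     (\<forall>X. is_rep Q X \<longrightarrow> (\<exists>C\<in>\<C>. \<exists>f. is_hom Q C X f \<and>
        (\<forall>C'\<in>\<C>. \<forall>h. is_hom Q C' X h \<longrightarrow> (\<exists>h'. is_hom Q C' C h' \<and> hom_eq Q (hom_comp f h') h))))"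

definition covariantly_finite :: "('v, 'a) quiver \<Rightarrow> ('v, 'a, 'k::field) rep set \<Rightarrow> bool" where
  "covariantly_finite Q \<C> \<longleftrightarrow>
     (\<forall>X. is_rep Q X \<longrightarrow> (\<exists>C\<in>\<C>. \<exists>f. is_hom Q X C f \<and>
        (\<forall>C'\<in>\<C>. \<forall>h. is_hom Q X C' h \<longrightarrow> (\<exists>h'. is_hom Q C C' h' \<and> hom_eq Q (hom_comp h' f) h))))"

definition functorially_finite :: "('v, 'a) quiver \<Rightarrow> ('v, 'a, 'k::field) rep set \<Rightarrow> bool" where
  "functorially_finite Q \<C> \<longleftrightarrow> \<C> \<subseteq> {X. is_rep Q X} \<and>
     contravariantly_finite Q \<C> \<and> covariantly_finite Q \<C>"

definition n_cluster_tilting :: "('v, 'a) quiver \<Rightarrow> nat \<Rightarrow> ('v, 'a, 'k::field) rep set \<Rightarrow> bool" where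
  "n_cluster_tilting Q n \<C> \<longleftrightarrow> functorially_finite Q \<C> \<and>
     \<C> = {X. is_rep Q X \<and> (\<forall>i. 0 < i \<and> i < n \<longrightarrow> (\<forall>C\<in>\<C>. ext_zero Q i X C))} \<and>
     \<C> = {X. is_rep Q X \<and> (\<forall>i. 0 < i \<and> i < n \<longrightarrow> (\<forall>C\<in>\<C>. ext_zero Q i C X))}"

end

theory Submission
  imports Defs "Jordan_Normal_Form.Gauss_Jordan_Elimination"
begin

text \<open>The indecomposable projective P_v and the indecomposable
  injective I_u of kQ/J^2 satisfy Ext^i(P_v, -) = 0 = Ext^i(-, I_u) for i > 0, so both lie in
  every n-cluster tilting subcategory, and n >= 2 forces Ext^1(I_u, P_v) = 0. On the other hand,
  if out_deg v + in_deg u >= 4, a suitable arrow c0 can be used to glue I_u onto P_v, sending an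
  arrow b0 into u (a basis vector of I_u) to an arrow d0 out of v (a basis vector of P_v). A
  splitting of the resulting extension 0 -> P_v -> E -> I_u -> 0 amounts to a solution of a
  small linear system, and for a good choice of (b0, c0, d0) its equations contradict each other:
  either there are two parallel arrows v -> u, or there are further arrows out of v and into u,
  or one of the two vertices has two further arrows.\<close>

section \<open>Matrices indexed by finite sets\<close>

definition set_enum :: "'b set \<Rightarrow> nat \<Rightarrow> 'b" where
  "set_enum S = (SOME h. bij_betw h {..<card S} S)"

definition set_index :: "'b set \<Rightarrow> 'b \<Rightarrow> nat" where
  "set_index S = the_inv_into {..<card S} (set_enum S)"

lemma bij_betw_set_enum: "finite S \<Longrightarrow> bij_betw (set_enum S) {..<card S} S"
proof -
  assume "finite S"
  then obtain h where "bij_betw h {..<card S} S"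
    using ex_bij_betw_nat_finite atLeast0LessThan by metis
  thus ?thesis unfolding set_enum_def by (rule someI[of "\<lambda>h. bij_betw h {..<card S} S"])
qed

lemma set_index_set_enum [simp]: "finite S \<Longrightarrow> i < card S \<Longrightarrow> set_index S (set_enum S i) = i"
  unfolding set_index_def using bij_betw_set_enum
  by (metis bij_betw_def lessThan_iff the_inv_into_f_f)

lemma set_enum_set_index [simp]: "finite S \<Longrightarrow> x \<in> S \<Longrightarrow> set_enum S (set_index S x) = x"
  unfolding set_index_def using bij_betw_set_enum
  by (metis bij_betw_def f_the_inv_into_f_bij_betw)

lemma set_index_less [simp]: "finite S \<Longrightarrow> x \<in> S \<Longrightarrow> set_index S x < card S"
  unfolding set_index_def using bij_betw_set_enum
  by (metis bij_betw_def lessThan_iff the_inv_into_into order_refl)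

lemma set_enum_in [simp]: "finite S \<Longrightarrow> i < card S \<Longrightarrow> set_enum S i \<in> S"
  using bij_betw_set_enum by (metis bij_betwE lessThan_iff)

lemma set_index_eq_iff [simp]:
  "finite S \<Longrightarrow> x \<in> S \<Longrightarrow> y \<in> S \<Longrightarrow> set_index S x = set_index S y \<longleftrightarrow> x = y"
  by (metis set_enum_set_index)

lemma sum_set_enum: "finite S \<Longrightarrow> (\<Sum>i<card S. g (set_enum S i)) = (\<Sum>s\<in>S. g s)"
  using sum.reindex_bij_betw[OF bij_betw_set_enum] by simp

text \<open>All modules below are given on explicit bases indexed by sets of paths, and matrices are
  manipulated entrywise through these index sets, enumerated by \<open>set_enum\<close>. Even the standard
  coordinates {..<n} are re-enumerated this way; this is harmless, as only whole sums over an
  index set occur.\<close>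

definition mat_on :: "'b set \<Rightarrow> 'c set \<Rightarrow> ('b \<Rightarrow> 'c \<Rightarrow> 'k) \<Rightarrow> 'k mat" where
  "mat_on R C \<phi> = mat (card R) (card C) (\<lambda>(i, j). \<phi> (set_enum R i) (set_enum C j))"

definition vec_on :: "'b set \<Rightarrow> ('b \<Rightarrow> 'k) \<Rightarrow> 'k vec" where
  "vec_on R \<phi> = vec (card R) (\<lambda>i. \<phi> (set_enum R i))"

definition entry_on :: "'b set \<Rightarrow> 'c set \<Rightarrow> 'k mat \<Rightarrow> 'b \<Rightarrow> 'c \<Rightarrow> 'k" where
  "entry_on R C A r c = A $$ (set_index R r, set_index C c)"

definition coord_on :: "'b set \<Rightarrow> 'k vec \<Rightarrow> 'b \<Rightarrow> 'k" where
  "coord_on R x r = x $ set_index R r"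

lemma mat_on_carrier [simp]: "mat_on R C \<phi> \<in> carrier_mat (card R) (card C)"
  unfolding mat_on_def by simp

lemma dim_mat_on [simp]: "dim_row (mat_on R C \<phi>) = card R" "dim_col (mat_on R C \<phi>) = card C"
  unfolding mat_on_def by simp_all

lemma vec_on_carrier [simp]: "vec_on R \<phi> \<in> carrier_vec (card R)"
  unfolding vec_on_def by simp

lemma entry_on_mat_on [simp]:
  "finite R \<Longrightarrow> finite C \<Longrightarrow> r \<in> R \<Longrightarrow> c \<in> C \<Longrightarrow> entry_on R C (mat_on R C \<phi>) r c = \<phi> r c"
  unfolding entry_on_def mat_on_def by simp

lemma coord_on_vec_on [simp]: "finite R \<Longrightarrow> r \<in> R \<Longrightarrow> coord_on R (vec_on R \<phi>) r = \<phi> r"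
  unfolding coord_on_def vec_on_def by simp

lemma entry_on_one_mat [simp]:
  "finite R \<Longrightarrow> r \<in> R \<Longrightarrow> r' \<in> R \<Longrightarrow> entry_on R R (1\<^sub>m (card R)) r r' = (if r = r' then 1 else 0)"
  unfolding entry_on_def by simp

lemma entry_on_zero_mat [simp]:
  "finite R \<Longrightarrow> finite C \<Longrightarrow> r \<in> R \<Longrightarrow> c \<in> C \<Longrightarrow> card R = n \<Longrightarrow> card C = m \<Longrightarrow>
    entry_on R C (0\<^sub>m n m) r c = 0"
  unfolding entry_on_def using set_index_less[of R r] set_index_less[of C c] by simp

lemma coord_on_zero_vec [simp]: "finite R \<Longrightarrow> r \<in> R \<Longrightarrow> card R = n \<Longrightarrow> coord_on R (0\<^sub>v n) r = 0"
  unfolding coord_on_def using set_index_less[of R r] by simp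

lemma zero_mat_mult_vec [simp]: "x \<in> carrier_vec m \<Longrightarrow> 0\<^sub>m n m *\<^sub>v x = 0\<^sub>v n"
  by (intro eq_vecI) (auto simp: scalar_prod_def)

lemma coord_on_col:
  "finite R \<Longrightarrow> finite C \<Longrightarrow> A \<in> carrier_mat (card R) (card C) \<Longrightarrow> r \<in> R \<Longrightarrow> c \<in> C \<Longrightarrow>
    coord_on R (col A (set_index C c)) r = entry_on R C A r c"
  unfolding entry_on_def coord_on_def by simp

lemma mat_on_eqI:
  assumes "finite R" "finite C"
    and "A \<in> carrier_mat (card R) (card C)" "B \<in> carrier_mat (card R) (card C)"
    and "\<And>r c. r \<in> R \<Longrightarrow> c \<in> C \<Longrightarrow> entry_on R C A r c = entry_on R C B r c"
  shows "A = B"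
proof (rule eq_matI)
  fix i j assume "i < dim_row B" "j < dim_col B"
  hence i: "i < card R" and j: "j < card C" using assms by auto
  have "entry_on R C A (set_enum R i) (set_enum C j) = entry_on R C B (set_enum R i) (set_enum C j)"
    using assms i j by auto
  thus "A $$ (i, j) = B $$ (i, j)" unfolding entry_on_def using assms i j by simp
qed (use assms in auto)

lemma vec_on_eqI:
  assumes "finite R" "x \<in> carrier_vec (card R)" "y \<in> carrier_vec (card R)"
    and "\<And>r. r \<in> R \<Longrightarrow> coord_on R x r = coord_on R y r"
  shows "x = y"
proof (rule eq_vecI)
  fix i assume "i < dim_vec y"
  hence i: "i < card R" using assms by auto
  have "coord_on R x (set_enum R i) = coord_on R y (set_enum R i)" using assms i by auto
  thus "x $ i = y $ i" unfolding coord_on_def using assms i by simp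
qed (use assms in auto)

lemma entry_on_mult:
  assumes "finite R" "finite S" "finite T"
    and "A \<in> carrier_mat (card R) (card S)" "B \<in> carrier_mat (card S) (card T)"
    and "r \<in> R" "t \<in> T"
  shows "entry_on R T (A * B) r t = (\<Sum>s\<in>S. entry_on R S A r s * entry_on S T B s t)"
proof -
  have "entry_on R T (A * B) r t
      = (\<Sum>i<card S. A $$ (set_index R r, set_index S (set_enum S i)) * B $$ (set_index S (set_enum S i), set_index T t))"
    using assms by (simp add: entry_on_def scalar_prod_def atLeast0LessThan)
  also have "\<dots> = (\<Sum>s\<in>S. entry_on R S A r s * entry_on S T B s t)"
    unfolding entry_on_def by (rule sum_set_enum[OF assms(2)])
  finally show ?thesis .
qed

lemma coord_on_mult_mat_vec:
  assumes "finite R" "finite S"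
    and "A \<in> carrier_mat (card R) (card S)" "x \<in> carrier_vec (card S)" "r \<in> R"
  shows "coord_on R (A *\<^sub>v x) r = (\<Sum>s\<in>S. entry_on R S A r s * coord_on S x s)"
proof -
  have "coord_on R (A *\<^sub>v x) r
      = (\<Sum>i<card S. A $$ (set_index R r, set_index S (set_enum S i)) * x $ set_index S (set_enum S i))"
    using assms by (simp add: coord_on_def scalar_prod_def atLeast0LessThan)
  also have "\<dots> = (\<Sum>s\<in>S. entry_on R S A r s * coord_on S x s)"
    unfolding entry_on_def coord_on_def by (rule sum_set_enum[OF assms(2)])
  finally show ?thesis .
qed

lemma coord_on_mat_on_mult_vec:
  "finite R \<Longrightarrow> finite C \<Longrightarrow> x \<in> carrier_vec (card C) \<Longrightarrow> r \<in> R \<Longrightarrow>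
    coord_on R (mat_on R C \<phi> *\<^sub>v x) r = (\<Sum>c\<in>C. \<phi> r c * coord_on C x c)"
  by (simp add: coord_on_mult_mat_vec[of R C])

lemma sum_indicator_mult [simp]:
  fixes f :: "_ \<Rightarrow> 'k::field"
  assumes "finite S"
  shows "(\<Sum>s\<in>S. (if s = t then 1 else 0) * f s) = (if t \<in> S then f t else 0)"
    and "(\<Sum>s\<in>S. (if t = s then 1 else 0) * f s) = (if t \<in> S then f t else 0)"
    and "(\<Sum>s\<in>S. f s * (if s = t then 1 else 0)) = (if t \<in> S then f t else 0)"
    and "(\<Sum>s\<in>S. f s * (if t = s then 1 else 0)) = (if t \<in> S then f t else 0)"
  using assms by (simp_all add: if_distrib[of "\<lambda>x. x * _"] if_distrib[of "\<lambda>x. _ * x"] sum.delta sum.delta'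
      cong: if_cong)

lemma mult_unit_vec_eq_col:
  fixes A :: "'k::field mat"
  shows "A \<in> carrier_mat n m \<Longrightarrow> j < m \<Longrightarrow> A *\<^sub>v unit_vec m j = col A j"
  using col_mult2[of A n m "1\<^sub>m m" m j] by simp

lemma surjective_mat_right_inverse:
  fixes g :: "'k::field mat"
  assumes g: "g \<in> carrier_mat m n" and surj: "\<forall>y\<in>carrier_vec m. \<exists>x\<in>carrier_vec n. g *\<^sub>v x = y"
  shows "\<exists>G\<in>carrier_mat n m. g * G = 1\<^sub>m m"
proof -
  define xs where "xs j = (SOME x. x \<in> carrier_vec n \<and> g *\<^sub>v x = unit_vec m j)" for j
  have xs: "xs j \<in> carrier_vec n \<and> g *\<^sub>v xs j = unit_vec m j" for j
    unfolding xs_def using surj unit_vec_carrier[of m j] by (metis (mono_tags, lifting) someI_ex)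
  define G where "G = mat n m (\<lambda>(i, j). xs j $ i)"
  have G: "G \<in> carrier_mat n m" unfolding G_def by simp
  have "g * G = 1\<^sub>m m"
  proof (rule mat_col_eqI)
    fix j assume "j < dim_col (1\<^sub>m m :: 'k mat)"
    hence j: "j < m" by simp
    have "col G j = xs j" unfolding G_def using xs[of j] j by (intro eq_vecI) auto
    thus "col (g * G) j = col (1\<^sub>m m) j" using col_mult2[OF g G j] xs[of j] j by simp
  qed (use g G in auto)
  thus ?thesis using G by blast
qed

lemma injective_mat_left_inverse:
  fixes F :: "'k::field mat"
  assumes F: "F \<in> carrier_mat d r" and inj: "\<forall>x\<in>carrier_vec r. F *\<^sub>v x = 0\<^sub>v d \<longrightarrow> x = 0\<^sub>v r"
  shows "\<exists>L\<in>carrier_mat r d. L * F = 1\<^sub>m r"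
proof -
  obtain C where "gauss_jordan_single F = C" by auto
  note GJ = gauss_jordan_single[OF F this]
  have C: "C \<in> carrier_mat d r" and ref: "row_echelon_form C" using GJ by auto
  obtain P where CPF: "C = P * F" and P: "P \<in> carrier_mat d d" using GJ(4) by blast
  obtain f where piv: "pivot_fun C f r" using ref C unfolding row_echelon_form_def by auto
  have all_pivots: "snd ` set (pivot_positions C) = {0..<r}"
  proof (rule ccontr)
    assume "snd ` set (pivot_positions C) \<noteq> {0..<r}"
    note base = find_base_vector[OF ref C this]
    have "F *\<^sub>v find_base_vector C = 0\<^sub>v d" using GJ(1)[OF base(1)] base(3) by simp
    thus False using inj base(1,2) by blast
  qed
  have "\<exists>i. i < d \<and> f i = j" if "j < r" for j
  proof -
    have "j \<in> snd ` set (pivot_positions C)" using all_pivots that by simp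
    thus ?thesis unfolding pivot_positions[OF C piv] by auto
  qed
  then obtain row_of where row_of: "\<And>j. j < r \<Longrightarrow> row_of j < d \<and> f (row_of j) = j" by metis
  note pivot = pivot_funD[OF _ piv, of d]
  define L where "L = mat r d (\<lambda>(a, b). P $$ (row_of a, b))"
  have L: "L \<in> carrier_mat r d" unfolding L_def by simp
  have "L * F = 1\<^sub>m r"
  proof (rule eq_matI)
    fix a b assume "a < dim_row (1\<^sub>m r :: 'k mat)" and "b < dim_col (1\<^sub>m r :: 'k mat)"
    hence a: "a < r" and b: "b < r" by auto
    have "row L a = row P (row_of a)" unfolding L_def using a row_of[OF a] P by (intro eq_vecI) auto
    hence "(L * F) $$ (a, b) = C $$ (row_of a, b)"
      unfolding CPF using a b L F P row_of[OF a] by simp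
    also have "\<dots> = (if a = b then 1 else 0)"
    proof (cases "a = b")
      case True thus ?thesis using pivot(4)[of "row_of b"] C row_of[OF b] b by auto
    next
      case False
      hence "row_of a \<noteq> row_of b" using row_of[OF a] row_of[OF b] by metis
      thus ?thesis using pivot(5)[of "row_of b"] C row_of[OF a] row_of[OF b] b False by auto
    qed
    finally show "(L * F) $$ (a, b) = 1\<^sub>m r $$ (a, b)" using a b by simp
  qed (use L F in auto)
  thus ?thesis using L by blast
qed

section \<open>Morphisms and vanishing of extensions\<close>

lemma carrier_mat_no_cols_eq: "A \<in> carrier_mat n 0 \<Longrightarrow> B \<in> carrier_mat n 0 \<Longrightarrow> A = B"
  by (intro eq_matI) auto

lemma is_hom_hom_id: "is_rep Q X \<Longrightarrow> is_hom Q X X (hom_id X)"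
  unfolding is_hom_def hom_id_def is_rep_def by auto

lemma is_hom_hom_comp:
  assumes fq: "finite_quiver Q" and X: "is_rep Q X" and Y: "is_rep Q Y" and Z: "is_rep Q Z"
    and f: "is_hom Q X Y f" and g: "is_hom Q Y Z g"
  shows "is_hom Q X Z (hom_comp g f)"
  unfolding is_hom_def hom_comp_def
proof (intro conjI ballI)
  fix w assume "w \<in> verts Q"
  thus "g w * f w \<in> carrier_mat (rdim Z w) (rdim X w)"
    using f g by (auto simp: is_hom_def intro: mult_carrier_mat)
next
  fix c assume c: "c \<in> arrs Q"
  hence "src Q c \<in> verts Q" "tgt Q c \<in> verts Q" using fq by (auto simp: finite_quiver_def)
  hence cs: "f (src Q c) \<in> carrier_mat (rdim Y (src Q c)) (rdim X (src Q c))"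
    "f (tgt Q c) \<in> carrier_mat (rdim Y (tgt Q c)) (rdim X (tgt Q c))"
    "g (src Q c) \<in> carrier_mat (rdim Z (src Q c)) (rdim Y (src Q c))"
    "g (tgt Q c) \<in> carrier_mat (rdim Z (tgt Q c)) (rdim Y (tgt Q c))"
    "rmap X c \<in> carrier_mat (rdim X (tgt Q c)) (rdim X (src Q c))"
    "rmap Y c \<in> carrier_mat (rdim Y (tgt Q c)) (rdim Y (src Q c))"
    "rmap Z c \<in> carrier_mat (rdim Z (tgt Q c)) (rdim Z (src Q c))"
    using f g X Y Z c by (auto simp: is_hom_def is_rep_def)
  have "g (tgt Q c) * f (tgt Q c) * rmap X c = g (tgt Q c) * (f (tgt Q c) * rmap X c)"
    using cs by simp
  also have "\<dots> = (g (tgt Q c) * rmap Y c) * f (src Q c)"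
    using f c cs by (simp add: is_hom_def)
  also have "\<dots> = rmap Z c * (g (src Q c) * f (src Q c))"
    using g c cs by (simp add: is_hom_def)
  finally show "g (tgt Q c) * f (tgt Q c) * rmap X c = rmap Z c * (g (src Q c) * f (src Q c))" .
qed

definition zero_rep :: "('v, 'a, 'k::field) rep" where
  "zero_rep = \<lparr>rdim = (\<lambda>_. 0), rmap = (\<lambda>_. 0\<^sub>m 0 0)\<rparr>"

lemma zero_rep_simps [simp]: "rdim zero_rep w = 0" "rmap zero_rep a = 0\<^sub>m 0 0"
  unfolding zero_rep_def by simp_all

lemma is_rep_zero_rep: "is_rep Q zero_rep"
  unfolding is_rep_def by auto

lemma is_hom_from_zero_rep: "is_rep Q X \<Longrightarrow> is_hom Q zero_rep X (\<lambda>w. 0\<^sub>m (rdim X w) 0)"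
  unfolding is_hom_def is_rep_def by (auto intro!: carrier_mat_no_cols_eq)

lemma is_projective_zero_rep: "is_projective Q zero_rep"
  unfolding is_projective_def
proof (intro conjI allI impI is_rep_zero_rep)
  fix X Y g h
  assume "is_rep Q X \<and> is_rep Q Y \<and> is_hom Q X Y g \<and> hom_surjective Q X Y g \<and> is_hom Q zero_rep Y h"
  moreover from this have "hom_eq Q (hom_comp g (\<lambda>w. 0\<^sub>m (rdim X w) 0)) h"
    unfolding hom_eq_def hom_comp_def by (auto simp: is_hom_def intro!: carrier_mat_no_cols_eq)
  ultimately show "\<exists>h'. is_hom Q zero_rep X h' \<and> hom_eq Q (hom_comp g h') h"
    using is_hom_from_zero_rep by blast
qed

lemma ses_zero_rep:
  assumes P: "is_rep Q P"
  shows "ses Q zero_rep P P (\<lambda>w. 0\<^sub>m (rdim P w) 0) (hom_id P)"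
  unfolding ses_def
proof (intro conjI is_rep_zero_rep P is_hom_hom_id is_hom_from_zero_rep)
  show "hom_injective Q zero_rep (\<lambda>w. 0\<^sub>m (rdim P w) 0)" unfolding hom_injective_def by auto
  show "hom_surjective Q P P (hom_id P)" unfolding hom_surjective_def hom_id_def by auto
  show "\<forall>w\<in>verts Q. \<forall>y\<in>carrier_vec (rdim P w). (hom_id P w *\<^sub>v y = 0\<^sub>v (rdim P w)) =
      (\<exists>x\<in>carrier_vec (rdim zero_rep w). 0\<^sub>m (rdim P w) 0 *\<^sub>v x = y)"
    by (auto simp: hom_id_def intro: exI[of _ "0\<^sub>v 0"])
qed

lemma ext1_zero_zero_rep: "ext1_zero Q zero_rep X"
  unfolding ext1_zero_def
proof (intro allI impI)
  fix E f g assume "ses Q X E zero_rep f g"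
  hence "is_rep Q E" and "is_hom Q E zero_rep g" by (simp_all add: ses_def)
  moreover from this have "hom_eq Q (hom_comp g (\<lambda>w. 0\<^sub>m (rdim E w) 0)) (hom_id zero_rep)"
    unfolding hom_eq_def hom_comp_def hom_id_def by (auto simp: is_hom_def intro!: eq_matI)
  ultimately show "\<exists>s. is_hom Q zero_rep E s \<and> hom_eq Q (hom_comp g s) (hom_id zero_rep)"
    using is_hom_from_zero_rep by blast
qed

lemma ext_zero_zero_rep: "ext_zero Q (Suc i) zero_rep X"
proof (induction i)
  case 0
  show ?case using ext1_zero_zero_rep by simp
next
  case (Suc i)
  show ?case using ses_zero_rep[OF is_rep_zero_rep] Suc is_projective_zero_rep
    by (simp only: ext_zero.simps) blast
qed

lemma ext1_zero_projective: "is_projective Q P \<Longrightarrow> ext1_zero Q P X"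
  unfolding ext1_zero_def is_projective_def ses_def by (metis is_hom_hom_id)

text \<open>Higher extensions vanish by dimension shifting along 0 -> 0 -> P -> P -> 0.\<close>

lemma ext_zero_projective:
  assumes P: "is_projective Q P" and "0 < i"
  shows "ext_zero Q i P X"
proof -
  obtain j where i: "i = Suc j" using \<open>0 < i\<close> gr0_implies_Suc by blast
  show ?thesis
  proof (cases j)
    case 0 thus ?thesis using i ext1_zero_projective[OF P] by simp
  next
    case (Suc j')
    have "ses Q zero_rep P P (\<lambda>w. 0\<^sub>m (rdim P w) 0) (hom_id P)"
      using P by (simp add: is_projective_def ses_zero_rep)
    thus ?thesis unfolding i Suc using P ext_zero_zero_rep[of Q j' X]
      by (simp only: ext_zero.simps) blast
  qed
qed

text \<open>Since ext_zero asks for some projective presentation, the one witnessing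
  Ext^i(C, X) = 0 is reused for I; X serves only to provide it.\<close>

lemma ext_zero_injective:
  assumes I: "\<And>Z. ext1_zero Q Z I"
  shows "0 < i \<Longrightarrow> ext_zero Q i C X \<Longrightarrow> ext_zero Q i C I"
proof (induction i arbitrary: C rule: less_induct)
  case (less i)
  then obtain j where i: "i = Suc j" using gr0_implies_Suc by blast
  show ?case
  proof (cases j)
    case 0 thus ?thesis using i I by simp
  next
    case (Suc j')
    with less.prems i obtain K P f g
      where "is_projective Q P" "ses Q K P C f g" "ext_zero Q (Suc j') K X" by auto
    moreover from this have "ext_zero Q (Suc j') K I" using less.IH i Suc by blast
    ultimately show ?thesis using i Suc by auto
  qed
qed

lemma cluster_tilting_ext1_zero:
  fixes \<C> :: "('v, 'a, 'k::field) rep set" and P I :: "('v, 'a, 'k) rep"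
  assumes ct: "n_cluster_tilting Q n \<C>" and "2 \<le> n"
    and P: "is_projective Q P" and I: "is_rep Q I" "\<And>Z. ext1_zero Q Z I"
  shows "ext1_zero Q I P"
proof -
  have C_left: "\<C> = {X. is_rep Q X \<and> (\<forall>i. 0 < i \<and> i < n \<longrightarrow> (\<forall>C\<in>\<C>. ext_zero Q i X C))}"
   and C_right: "\<C> = {X. is_rep Q X \<and> (\<forall>i. 0 < i \<and> i < n \<longrightarrow> (\<forall>C\<in>\<C>. ext_zero Q i C X))}"
    using ct unfolding n_cluster_tilting_def by blast+
  have P_in: "P \<in> \<C>"
    using P ext_zero_projective by (subst C_left) (auto simp: is_projective_def)
  have "I \<in> \<C>"
  proof (subst C_right, intro CollectI conjI I allI impI ballI)
    fix i C assume i: "0 < i \<and> i < n" and "C \<in> \<C>"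
    hence "ext_zero Q i C P" using P_in by (subst (asm) C_right) auto
    thus "ext_zero Q i C I" using ext_zero_injective[OF I(2)] i by blast
  qed
  hence "ext_zero Q 1 I P" using P_in \<open>2 \<le> n\<close> by (subst (asm) C_left) auto
  thus ?thesis by simp
qed

section \<open>Split short exact sequences\<close>

lemma ses_exact:
  "ses Q X E Z f g \<Longrightarrow> w \<in> verts Q \<Longrightarrow> y \<in> carrier_vec (rdim E w) \<Longrightarrow>
    g w *\<^sub>v y = 0\<^sub>v (rdim Z w) \<longleftrightarrow> (\<exists>x\<in>carrier_vec (rdim X w). f w *\<^sub>v x = y)"
  by (simp add: ses_def)

lemma ses_comp_eq_zero:
  fixes X E Z :: "('v, 'a, 'k::field) rep"
  assumes S: "ses Q X E Z f g" and w: "w \<in> verts Q"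
  shows "g w * f w = 0\<^sub>m (rdim Z w) (rdim X w)"
proof -
  have f: "f w \<in> carrier_mat (rdim E w) (rdim X w)" and g: "g w \<in> carrier_mat (rdim Z w) (rdim E w)"
    using S w by (auto simp: ses_def is_hom_def)
  show ?thesis
  proof (rule mat_col_eqI)
    fix j assume "j < dim_col (0\<^sub>m (rdim Z w) (rdim X w) :: 'k mat)"
    hence j: "j < rdim X w" by simp
    have "col (g w * f w) j = g w *\<^sub>v (f w *\<^sub>v unit_vec (rdim X w) j)"
      using col_mult2[OF g f j] mult_unit_vec_eq_col[OF f j] by simp
    also have "\<dots> = 0\<^sub>v (rdim Z w)"
      using ses_exact[OF S w, of "f w *\<^sub>v unit_vec (rdim X w) j"] f by auto
    finally show "col (g w * f w) j = col (0\<^sub>m (rdim Z w) (rdim X w)) j" using j by simp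
  qed (use f g in auto)
qed

lemma ses_factor_through_kernel:
  assumes S: "ses Q X E Z f g" and w: "w \<in> verts Q"
    and D: "D \<in> carrier_mat (rdim E w) k" and gD: "g w * D = 0\<^sub>m (rdim Z w) k"
  shows "\<exists>F\<in>carrier_mat (rdim X w) k. D = f w * F"
proof -
  have f: "f w \<in> carrier_mat (rdim E w) (rdim X w)" and g: "g w \<in> carrier_mat (rdim Z w) (rdim E w)"
    using S w by (auto simp: ses_def is_hom_def)
  have "\<exists>x\<in>carrier_vec (rdim X w). f w *\<^sub>v x = col D j" if j: "j < k" for j
  proof -
    have "g w *\<^sub>v col D j = 0\<^sub>v (rdim Z w)" using col_mult2[OF g D j] gD j by simp
    thus ?thesis using ses_exact[OF S w, of "col D j"] D j by simp
  qed
  then obtain xs where xs: "\<And>j. j < k \<Longrightarrow> xs j \<in> carrier_vec (rdim X w) \<and> f w *\<^sub>v xs j = col D j"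
    by metis
  define F where "F = mat (rdim X w) k (\<lambda>(i, j). xs j $ i)"
  have F: "F \<in> carrier_mat (rdim X w) k" unfolding F_def by simp
  have "D = f w * F"
  proof (rule mat_col_eqI)
    fix j assume "j < dim_col (f w * F)"
    hence j: "j < k" using F by simp
    have "col F j = xs j" unfolding F_def using xs[OF j] j by (intro eq_vecI) auto
    thus "col D j = col (f w * F) j" using col_mult2[OF f F j] xs[OF j] by simp
  qed (use D f F in auto)
  thus ?thesis using F by blast
qed

lemma is_hom_one_minus_comp:
  fixes X E :: "('v, 'a, 'k::field) rep"
  assumes fq: "finite_quiver Q" and X: "is_rep Q X" and E: "is_rep Q E"
    and f: "is_hom Q X E f" and r: "is_hom Q E X r"
  shows "is_hom Q E E (\<lambda>w. 1\<^sub>m (rdim E w) - f w * r w)"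
  unfolding is_hom_def
proof (intro conjI ballI)
  fix w assume "w \<in> verts Q"
  hence "f w \<in> carrier_mat (rdim E w) (rdim X w)" "r w \<in> carrier_mat (rdim X w) (rdim E w)"
    using f r by (simp_all add: is_hom_def)
  thus "1\<^sub>m (rdim E w) - f w * r w \<in> carrier_mat (rdim E w) (rdim E w)"
    by (meson minus_carrier_mat mult_carrier_mat one_carrier_mat)
next
  fix c assume c: "c \<in> arrs Q"
  define U where "U = src Q c"
  define T where "T = tgt Q c"
  have "U \<in> verts Q" "T \<in> verts Q" using fq c by (simp_all add: U_def T_def finite_quiver_def)
  hence fc: "f U \<in> carrier_mat (rdim E U) (rdim X U)" "f T \<in> carrier_mat (rdim E T) (rdim X T)"
    and rc: "r U \<in> carrier_mat (rdim X U) (rdim E U)" "r T \<in> carrier_mat (rdim X T) (rdim E T)"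
    using f r by (simp_all add: is_hom_def)
  have Xc: "rmap X c \<in> carrier_mat (rdim X T) (rdim X U)" and Ec: "rmap E c \<in> carrier_mat (rdim E T) (rdim E U)"
    using X E c unfolding U_def T_def by (simp_all add: is_rep_def)
  note cs = fc rc Xc Ec
  have "(1\<^sub>m (rdim E T) - f T * r T) * rmap E c = rmap E c - f T * r T * rmap E c"
    using cs by (simp add: minus_mult_distrib_mat[OF one_carrier_mat mult_carrier_mat[OF fc(2) rc(2)]])
  also have "f T * r T * rmap E c = f T * (r T * rmap E c)" using cs by simp
  also have "\<dots> = f T * (rmap X c * r U)" using r c unfolding U_def T_def by (simp add: is_hom_def)
  also have "\<dots> = (f T * rmap X c) * r U" using cs by simp
  also have "\<dots> = rmap E c * f U * r U" using f c unfolding U_def T_def by (simp add: is_hom_def)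
  also have "rmap E c - \<dots> = rmap E c * (1\<^sub>m (rdim E U) - f U * r U)"
    using cs by (simp add: mult_minus_distrib_mat[OF _ one_carrier_mat mult_carrier_mat[OF fc(1) rc(1)]])
  finally show "(1\<^sub>m (rdim E (tgt Q c)) - f (tgt Q c) * r (tgt Q c)) * rmap E c
      = rmap E c * (1\<^sub>m (rdim E (src Q c)) - f (src Q c) * r (src Q c))"
    unfolding U_def T_def .
qed

text \<open>A morphism \<pi> vanishing on the image of f induces \<pi> G on the cokernel Z, for any pointwise
  right inverse G of g: the defect E_c G - G Z_c of G is killed by g, so it lies in the image
  of f and is annihilated by \<pi>.\<close>

lemma is_hom_induced_on_cokernel:
  fixes X E Z :: "('v, 'a, 'k::field) rep"
  assumes fq: "finite_quiver Q" and S: "ses Q X E Z f g" and \<pi>: "is_hom Q E E \<pi>"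
    and \<pi>f: "\<And>w. w \<in> verts Q \<Longrightarrow> \<pi> w * f w = 0\<^sub>m (rdim E w) (rdim X w)"
    and G: "\<And>w. w \<in> verts Q \<Longrightarrow> G w \<in> carrier_mat (rdim E w) (rdim Z w)"
    and gG: "\<And>w. w \<in> verts Q \<Longrightarrow> g w * G w = 1\<^sub>m (rdim Z w)"
  shows "is_hom Q Z E (\<lambda>w. \<pi> w * G w)"
  unfolding is_hom_def
proof (intro conjI ballI)
  fix w assume "w \<in> verts Q"
  thus "\<pi> w * G w \<in> carrier_mat (rdim E w) (rdim Z w)" using \<pi> G by (auto simp: is_hom_def)
next
  fix c assume c: "c \<in> arrs Q"
  define U where "U = src Q c"
  define T where "T = tgt Q c"
  have U: "U \<in> verts Q" and T: "T \<in> verts Q" using fq c by (simp_all add: U_def T_def finite_quiver_def)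
  have g: "is_hom Q E Z g" and reps: "is_rep Q E" "is_rep Q Z" using S by (simp_all add: ses_def)
  have Ec: "rmap E c \<in> carrier_mat (rdim E T) (rdim E U)" and Zc: "rmap Z c \<in> carrier_mat (rdim Z T) (rdim Z U)"
    using reps c unfolding U_def T_def by (simp_all add: is_rep_def)
  have gc: "g U \<in> carrier_mat (rdim Z U) (rdim E U)" "g T \<in> carrier_mat (rdim Z T) (rdim E T)"
    and \<pi>c: "\<pi> U \<in> carrier_mat (rdim E U) (rdim E U)" "\<pi> T \<in> carrier_mat (rdim E T) (rdim E T)"
    using g \<pi> U T by (simp_all add: is_hom_def)
  note cs = Ec Zc gc \<pi>c G[OF U] G[OF T] gG[OF U] gG[OF T]
  define D where "D = rmap E c * G U - G T * rmap Z c"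
  have D: "D \<in> carrier_mat (rdim E T) (rdim Z U)" unfolding D_def using cs by auto
  have "g T * D = g T * (rmap E c * G U) - g T * (G T * rmap Z c)"
    unfolding D_def by (rule mult_minus_distrib_mat[OF gc(2) mult_carrier_mat[OF Ec G[OF U]] mult_carrier_mat[OF G[OF T] Zc]])
  also have "g T * (rmap E c * G U) = (g T * rmap E c) * G U" using cs by simp
  also have "\<dots> = rmap Z c * (g U * G U)" using g c cs unfolding U_def T_def by (simp add: is_hom_def)
  also have "g T * (G T * rmap Z c) = (g T * G T) * rmap Z c"
    by (rule assoc_mult_mat[OF gc(2) G[OF T] Zc, symmetric])
  finally have "g T * D = 0\<^sub>m (rdim Z T) (rdim Z U)" using cs by simp
  then obtain F where F: "F \<in> carrier_mat (rdim X T) (rdim Z U)" and DF: "D = f T * F"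
    using ses_factor_through_kernel[OF S T D] by blast
  have "f T \<in> carrier_mat (rdim E T) (rdim X T)" using S T by (simp add: ses_def is_hom_def)
  hence "\<pi> T * D = (\<pi> T * f T) * F" unfolding DF using \<pi>c(2) F by simp
  hence \<pi>D: "\<pi> T * D = 0\<^sub>m (rdim E T) (rdim Z U)" using \<pi>f[OF T] F by simp
  have \<pi>_comm: "\<pi> T * rmap E c = rmap E c * \<pi> U" using \<pi> c unfolding U_def T_def is_hom_def by blast
  have "rmap E c * (\<pi> U * G U) = (\<pi> T * rmap E c) * G U" unfolding \<pi>_comm using cs by simp
  also have "\<dots> = \<pi> T * (rmap E c * G U)" using cs by simp
  also have "rmap E c * G U = D + G T * rmap Z c" unfolding D_def using cs by (intro eq_matI) auto
  also have "\<pi> T * \<dots> = \<pi> T * D + \<pi> T * (G T * rmap Z c)"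
    using cs D by (simp add: mult_add_distrib_mat[OF \<pi>c(2) D])
  also have "\<dots> = \<pi> T * G T * rmap Z c" unfolding \<pi>D using cs by simp
  finally show "\<pi> (tgt Q c) * G (tgt Q c) * rmap Z c = rmap E c * (\<pi> (src Q c) * G (src Q c))"
    unfolding U_def T_def by simp
qed

lemma ses_split_of_retraction:
  fixes X E Z :: "('v, 'a, 'k::field) rep"
  assumes fq: "finite_quiver Q" and S: "ses Q X E Z f g"
    and r: "is_hom Q E X r" and rf: "\<forall>w\<in>verts Q. r w * f w = 1\<^sub>m (rdim X w)"
  shows "\<exists>s. is_hom Q Z E s \<and> hom_eq Q (hom_comp g s) (hom_id Z)"
proof -
  have f: "is_hom Q X E f" and g: "is_hom Q E Z g" and surj: "hom_surjective Q E Z g"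
    and X: "is_rep Q X" and E: "is_rep Q E"
    using S by (simp_all add: ses_def)
  have fc: "\<And>w. w \<in> verts Q \<Longrightarrow> f w \<in> carrier_mat (rdim E w) (rdim X w)"
    and gc: "\<And>w. w \<in> verts Q \<Longrightarrow> g w \<in> carrier_mat (rdim Z w) (rdim E w)"
    and rc: "\<And>w. w \<in> verts Q \<Longrightarrow> r w \<in> carrier_mat (rdim X w) (rdim E w)"
    using f g r by (simp_all add: is_hom_def)
  have "\<exists>G\<in>carrier_mat (rdim E w) (rdim Z w). g w * G = 1\<^sub>m (rdim Z w)" if "w \<in> verts Q" for w
    by (rule surjective_mat_right_inverse[OF gc[OF that]]) (use surj that in \<open>simp add: hom_surjective_def\<close>)
  then obtain G where G: "\<And>w. w \<in> verts Q \<Longrightarrow> G w \<in> carrier_mat (rdim E w) (rdim Z w)"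
    and gG: "\<And>w. w \<in> verts Q \<Longrightarrow> g w * G w = 1\<^sub>m (rdim Z w)" by metis
  define \<pi> where "\<pi> w = 1\<^sub>m (rdim E w) - f w * r w" for w
  have \<pi>f: "\<pi> w * f w = 0\<^sub>m (rdim E w) (rdim X w)" if w: "w \<in> verts Q" for w
  proof -
    have "\<pi> w * f w = f w - f w * r w * f w"
      unfolding \<pi>_def
      using minus_mult_distrib_mat[OF one_carrier_mat mult_carrier_mat[OF fc rc] fc] w fc[OF w] by simp
    also have "f w * r w * f w = f w" using rf w fc[OF w] rc[OF w] by simp
    finally show ?thesis using w fc by simp
  qed
  have "is_hom Q E E \<pi>" unfolding \<pi>_def by (rule is_hom_one_minus_comp[OF fq X E f r])
  hence "is_hom Q Z E (\<lambda>w. \<pi> w * G w)" using is_hom_induced_on_cokernel[OF fq S _ \<pi>f G gG] by blast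
  moreover have "g w * (\<pi> w * G w) = 1\<^sub>m (rdim Z w)" if w: "w \<in> verts Q" for w
  proof -
    note cs = fc[OF w] gc[OF w] rc[OF w] G[OF w] gG[OF w]
    have \<pi>c: "\<pi> w \<in> carrier_mat (rdim E w) (rdim E w)"
      unfolding \<pi>_def using cs by (meson minus_carrier_mat mult_carrier_mat one_carrier_mat)
    have "g w * (\<pi> w * G w) = (g w * \<pi> w) * G w"
      by (rule assoc_mult_mat[OF gc[OF w] \<pi>c G[OF w], symmetric])
    also have "g w * \<pi> w = g w - g w * f w * r w"
      unfolding \<pi>_def using cs
      by (simp add: mult_minus_distrib_mat[OF gc[OF w] one_carrier_mat mult_carrier_mat[OF fc[OF w] rc[OF w]]])
    also have "g w * f w * r w = 0\<^sub>m (rdim Z w) (rdim E w)" using ses_comp_eq_zero[OF S w] cs by simp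
    also have "g w - 0\<^sub>m (rdim Z w) (rdim E w) = g w" using cs by (intro eq_matI) auto
    finally show ?thesis using cs by simp
  qed
  ultimately show ?thesis unfolding hom_eq_def hom_comp_def hom_id_def by blast
qed

section \<open>Indecomposable projectives and injectives, and a twisted extension\<close>

text \<open>The indecomposable projective P_v: its basis at y consists of the paths of length at
  most one from v to y, the trivial path (None) and the arrows d with tgt d = y (Some d);
  an arrow c sends the trivial path to the path c.\<close>

definition proj_basis :: "('v, 'a) quiver \<Rightarrow> 'v \<Rightarrow> 'v \<Rightarrow> 'a option set" where
  "proj_basis Q v y =
     (if y = v then {None} else {}) \<union> Some ` {d \<in> arrs Q. src Q d = v \<and> tgt Q d = y}"

definition proj_action :: "('v, 'a) quiver \<Rightarrow> 'v \<Rightarrow> 'a \<Rightarrow> 'a option \<Rightarrow> 'a option \<Rightarrow> 'k::field" where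
  "proj_action Q v c p' p = (if src Q c = v \<and> p = None \<and> p' = Some c then 1 else 0)"

definition proj_rep :: "('v, 'a) quiver \<Rightarrow> 'v \<Rightarrow> ('v, 'a, 'k::field) rep" where
  "proj_rep Q v = \<lparr>rdim = (\<lambda>y. card (proj_basis Q v y)),
     rmap = (\<lambda>c. mat_on (proj_basis Q v (tgt Q c)) (proj_basis Q v (src Q c)) (proj_action Q v c))\<rparr>"

lemma proj_rep_simps [simp]:
  "rdim (proj_rep Q v) y = card (proj_basis Q v y)"
  "rmap (proj_rep Q v) c = mat_on (proj_basis Q v (tgt Q c)) (proj_basis Q v (src Q c)) (proj_action Q v c)"
  unfolding proj_rep_def by simp_all

lemma None_in_proj_basis [simp]: "None \<in> proj_basis Q v y \<longleftrightarrow> y = v"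
  unfolding proj_basis_def by auto

lemma Some_in_proj_basis [simp]:
  "Some d \<in> proj_basis Q v y \<longleftrightarrow> d \<in> arrs Q \<and> src Q d = v \<and> tgt Q d = y"
  unfolding proj_basis_def by auto

definition proj_rep_hom :: "('v, 'a) quiver \<Rightarrow> ('v, 'a, 'k::field) rep \<Rightarrow> 'v \<Rightarrow> 'k vec \<Rightarrow> 'v \<Rightarrow> 'k mat" where
  "proj_rep_hom Q X v x y = mat_on {..<rdim X y} (proj_basis Q v y)
     (\<lambda>i p. case p of None \<Rightarrow> coord_on {..<rdim X y} x i | Some d \<Rightarrow> coord_on {..<rdim X y} (rmap X d *\<^sub>v x) i)"

lemma proj_rep_hom_carrier [simp]: "proj_rep_hom Q X v x y \<in> carrier_mat (rdim X y) (card (proj_basis Q v y))"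
  unfolding proj_rep_hom_def using mat_on_carrier[of "{..<rdim X y}"] by simp

text \<open>Dually, the indecomposable injective I_u has at y the basis of paths of length at most one
  from y to u, and an arrow c sends the path c to the trivial path.\<close>

definition inj_basis :: "('v, 'a) quiver \<Rightarrow> 'v \<Rightarrow> 'v \<Rightarrow> 'a option set" where
  "inj_basis Q u y =
     (if y = u then {None} else {}) \<union> Some ` {b \<in> arrs Q. src Q b = y \<and> tgt Q b = u}"

definition inj_action :: "('v, 'a) quiver \<Rightarrow> 'v \<Rightarrow> 'a \<Rightarrow> 'a option \<Rightarrow> 'a option \<Rightarrow> 'k::field" where
  "inj_action Q u c i' i = (if tgt Q c = u \<and> i' = None \<and> i = Some c then 1 else 0)"

definition inj_rep :: "('v, 'a) quiver \<Rightarrow> 'v \<Rightarrow> ('v, 'a, 'k::field) rep" where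
  "inj_rep Q u = \<lparr>rdim = (\<lambda>y. card (inj_basis Q u y)),
     rmap = (\<lambda>c. mat_on (inj_basis Q u (tgt Q c)) (inj_basis Q u (src Q c)) (inj_action Q u c))\<rparr>"

lemma inj_rep_simps [simp]:
  "rdim (inj_rep Q u) y = card (inj_basis Q u y)"
  "rmap (inj_rep Q u) c = mat_on (inj_basis Q u (tgt Q c)) (inj_basis Q u (src Q c)) (inj_action Q u c)"
  unfolding inj_rep_def by simp_all

lemma None_in_inj_basis [simp]: "None \<in> inj_basis Q u y \<longleftrightarrow> y = u"
  unfolding inj_basis_def by auto

lemma Some_in_inj_basis [simp]:
  "Some b \<in> inj_basis Q u y \<longleftrightarrow> b \<in> arrs Q \<and> src Q b = y \<and> tgt Q b = u"
  unfolding inj_basis_def by auto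

text \<open>The morphism E -> I_u determined by the linear form \<lambda> on E_u given by the row None of L:
  it is \<lambda> on the trivial path and \<lambda> E_b on the coordinate of the arrow b.\<close>

definition inj_rep_hom :: "('v, 'a) quiver \<Rightarrow> ('v, 'a, 'k::field) rep \<Rightarrow> 'v \<Rightarrow> 'k mat \<Rightarrow> 'v \<Rightarrow> 'k mat" where
  "inj_rep_hom Q E u L w = mat_on (inj_basis Q u w) {..<rdim E w}
     (\<lambda>i l. case i of None \<Rightarrow> entry_on (inj_basis Q u u) {..<rdim E u} L None l
       | Some b \<Rightarrow> entry_on (inj_basis Q u u) {..<rdim E w} (L * rmap E b) None l)"

lemma inj_rep_hom_carrier [simp]: "inj_rep_hom Q E u L w \<in> carrier_mat (card (inj_basis Q u w)) (rdim E w)"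
  unfolding inj_rep_hom_def using mat_on_carrier[of "inj_basis Q u w" "{..<rdim E w}"] by simp

text \<open>The extension E of I_u by P_v: the direct sum of the two, except that the arrow c0 also
  sends the basis vector b0 of I_u to the basis vector d0 of P_v.\<close>

definition ext_basis :: "('v, 'a) quiver \<Rightarrow> 'v \<Rightarrow> 'v \<Rightarrow> 'v \<Rightarrow> ('a option + 'a option) set" where
  "ext_basis Q v u y = Inl ` proj_basis Q v y \<union> Inr ` inj_basis Q u y"

definition twist :: "'a \<Rightarrow> 'a \<Rightarrow> 'a \<Rightarrow> 'a \<Rightarrow> 'a option \<Rightarrow> 'a option \<Rightarrow> 'k::field" where
  "twist b0 c0 d0 c p i = (if c = c0 \<and> p = Some d0 \<and> i = Some b0 then 1 else 0)"

definition ext_action :: "('v, 'a) quiver \<Rightarrow> 'v \<Rightarrow> 'v \<Rightarrow> 'a \<Rightarrow> 'a \<Rightarrow> 'a \<Rightarrow> 'a \<Rightarrow>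
    ('a option + 'a option) \<Rightarrow> ('a option + 'a option) \<Rightarrow> 'k::field" where
  "ext_action Q v u b0 c0 d0 c x x' = (case (x, x') of
      (Inl p', Inl p) \<Rightarrow> proj_action Q v c p' p
    | (Inl p', Inr i) \<Rightarrow> twist b0 c0 d0 c p' i
    | (Inr _, Inl _) \<Rightarrow> 0
    | (Inr i', Inr i) \<Rightarrow> inj_action Q u c i' i)"

definition ext_rep :: "('v, 'a) quiver \<Rightarrow> 'v \<Rightarrow> 'v \<Rightarrow> 'a \<Rightarrow> 'a \<Rightarrow> 'a \<Rightarrow> ('v, 'a, 'k::field) rep" where
  "ext_rep Q v u b0 c0 d0 = \<lparr>rdim = (\<lambda>y. card (ext_basis Q v u y)),
     rmap = (\<lambda>c. mat_on (ext_basis Q v u (tgt Q c)) (ext_basis Q v u (src Q c)) (ext_action Q v u b0 c0 d0 c))\<rparr>"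

definition ext_incl :: "('v, 'a) quiver \<Rightarrow> 'v \<Rightarrow> 'v \<Rightarrow> 'v \<Rightarrow> 'k::field mat" where
  "ext_incl Q v u w = mat_on (ext_basis Q v u w) (proj_basis Q v w) (\<lambda>x p. if x = Inl p then 1 else 0)"

definition ext_proj :: "('v, 'a) quiver \<Rightarrow> 'v \<Rightarrow> 'v \<Rightarrow> 'v \<Rightarrow> 'k::field mat" where
  "ext_proj Q v u w = mat_on (inj_basis Q u w) (ext_basis Q v u w) (\<lambda>i x. if x = Inr i then 1 else 0)"

text \<open>If s is a section of E -> I_u, let \<alpha> b be the coefficient of the trivial path of P_v in
  s_v(b), for b : v -> u, and \<beta> d the coefficient of d in s_u(trivial path of I_u), for d : v -> u.
  Comparing the coefficients of d in s(c b) and in c s(b), for arrows c : S -> T, b : S -> u and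
  d : v -> T, gives these equations; the summand 1 comes from the twist.\<close>

definition splitting_eqs :: "('v, 'a) quiver \<Rightarrow> 'v \<Rightarrow> 'v \<Rightarrow> 'a \<Rightarrow> 'a \<Rightarrow> 'a \<Rightarrow> ('a \<Rightarrow> 'k::field) \<Rightarrow> ('a \<Rightarrow> 'k) \<Rightarrow> bool" where
  "splitting_eqs Q v u b0 c0 d0 \<alpha> \<beta> \<longleftrightarrow> (\<forall>c\<in>arrs Q. \<forall>d\<in>arrs Q. \<forall>b\<in>arrs Q.
     src Q d = v \<longrightarrow> tgt Q d = tgt Q c \<longrightarrow> src Q b = src Q c \<longrightarrow> tgt Q b = u \<longrightarrow>
     (if src Q c = v \<and> d = c then \<alpha> b else 0) + (if c = c0 \<and> d = d0 \<and> b = b0 then 1 else 0)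
       = (if tgt Q c = u \<and> b = c then \<beta> d else 0))"

lemma ext_action_simps [simp]:
  "ext_action Q v u b0 c0 d0 c (Inl p') (Inl p) = proj_action Q v c p' p"
  "ext_action Q v u b0 c0 d0 c (Inl p') (Inr i) = twist b0 c0 d0 c p' i"
  "ext_action Q v u b0 c0 d0 c (Inr i') (Inl p) = 0"
  "ext_action Q v u b0 c0 d0 c (Inr i') (Inr i) = inj_action Q u c i' i"
  unfolding ext_action_def by simp_all

lemma ext_rep_simps [simp]:
  "rdim (ext_rep Q v u b0 c0 d0) y = card (ext_basis Q v u y)"
  "rmap (ext_rep Q v u b0 c0 d0) c
     = mat_on (ext_basis Q v u (tgt Q c)) (ext_basis Q v u (src Q c)) (ext_action Q v u b0 c0 d0 c)"
  unfolding ext_rep_def by simp_all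

lemma Inl_in_ext_basis [simp]: "Inl p \<in> ext_basis Q v u y \<longleftrightarrow> p \<in> proj_basis Q v y"
  unfolding ext_basis_def by auto

lemma Inr_in_ext_basis [simp]: "Inr i \<in> ext_basis Q v u y \<longleftrightarrow> i \<in> inj_basis Q u y"
  unfolding ext_basis_def by auto

context
  fixes Q :: "('v, 'a) quiver"
  assumes fq: "finite_quiver Q"
begin

lemma finite_proj_basis [simp]: "finite (proj_basis Q v y)"
  using fq unfolding proj_basis_def finite_quiver_def by auto

lemma is_rep_proj_rep: "is_rep Q (proj_rep Q v :: ('v, 'a, 'k::field) rep)"
  unfolding is_rep_def
proof (intro conjI ballI impI)
  fix a b assume ab: "tgt Q a = src Q b"
  let ?P = "proj_rep Q v :: ('v, 'a, 'k) rep"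
  show "rmap ?P b * rmap ?P a = 0\<^sub>m (rdim ?P (tgt Q b)) (rdim ?P (src Q a))"
  proof (rule mat_on_eqI[of "proj_basis Q v (tgt Q b)" "proj_basis Q v (src Q a)"])
    fix p p' assume "p \<in> proj_basis Q v (tgt Q b)" and "p' \<in> proj_basis Q v (src Q a)"
    moreover have "(\<Sum>q\<in>proj_basis Q v (tgt Q a). proj_action Q v b p q * proj_action Q v a q p') = (0::'k)"
      by (rule sum.neutral) (auto simp: proj_action_def)
    ultimately show "entry_on (proj_basis Q v (tgt Q b)) (proj_basis Q v (src Q a)) (rmap ?P b * rmap ?P a) p p'
      = entry_on (proj_basis Q v (tgt Q b)) (proj_basis Q v (src Q a)) (0\<^sub>m (rdim ?P (tgt Q b)) (rdim ?P (src Q a))) p p'"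
      using ab by (simp add: entry_on_mult[of _ "proj_basis Q v (tgt Q a)"])
  qed (use ab in \<open>auto intro!: mult_carrier_mat[OF mat_on_carrier]\<close>)
qed auto

lemma entry_on_proj_rep_hom [simp]:
  "i < rdim X y \<Longrightarrow> p \<in> proj_basis Q v y \<Longrightarrow>
    entry_on {..<rdim X y} (proj_basis Q v y) (proj_rep_hom Q X v x y) i p =
      (case p of None \<Rightarrow> coord_on {..<rdim X y} x i | Some d \<Rightarrow> coord_on {..<rdim X y} (rmap X d *\<^sub>v x) i)"
  unfolding proj_rep_hom_def by simp

lemma is_hom_proj_rep_hom:
  fixes X :: "('v, 'a, 'k::field) rep"
  assumes X: "is_rep Q X" and x: "x \<in> carrier_vec (rdim X v)"
  shows "is_hom Q (proj_rep Q v) X (proj_rep_hom Q X v x)"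
  unfolding is_hom_def
proof (intro conjI ballI)
  fix c assume c: "c \<in> arrs Q"
  let ?H = "proj_rep_hom Q X v x" and ?S = "src Q c" and ?T = "tgt Q c"
  let ?N = "\<lambda>y. {..<rdim X y}"
  have Xc: "\<And>c. c \<in> arrs Q \<Longrightarrow> rmap X c \<in> carrier_mat (rdim X (tgt Q c)) (rdim X (src Q c))"
    and X0: "\<And>a b. a \<in> arrs Q \<Longrightarrow> b \<in> arrs Q \<Longrightarrow> tgt Q a = src Q b \<Longrightarrow>
        rmap X b * rmap X a = 0\<^sub>m (rdim X (tgt Q b)) (rdim X (src Q a))"
    using X by (simp_all add: is_rep_def)
  show "?H ?T * rmap (proj_rep Q v) c = rmap X c * ?H ?S"
  proof (rule mat_on_eqI[of "?N ?T" "proj_basis Q v ?S"])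
    fix i p assume i: "i \<in> ?N ?T" and p: "p \<in> proj_basis Q v ?S"
    have lhs: "entry_on (?N ?T) (proj_basis Q v ?S) (?H ?T * rmap (proj_rep Q v) c) i p
        = (\<Sum>p'\<in>proj_basis Q v ?T. entry_on (?N ?T) (proj_basis Q v ?T) (?H ?T) i p' * proj_action Q v c p' p)"
      using i p by (simp add: entry_on_mult[of _ "proj_basis Q v ?T"])
    have rhs: "entry_on (?N ?T) (proj_basis Q v ?S) (rmap X c * ?H ?S) i p
        = (\<Sum>l\<in>?N ?S. entry_on (?N ?T) (?N ?S) (rmap X c) i l * entry_on (?N ?S) (proj_basis Q v ?S) (?H ?S) l p)"
      using i p Xc[OF c] by (simp add: entry_on_mult[of _ "?N ?S"])
    show "entry_on (?N ?T) (proj_basis Q v ?S) (?H ?T * rmap (proj_rep Q v) c) i p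
        = entry_on (?N ?T) (proj_basis Q v ?S) (rmap X c * ?H ?S) i p"
    proof (cases p)
      case None
      hence "?S = v" using p by simp
      thus ?thesis unfolding lhs rhs using None c i x Xc[OF c]
        by (simp add: proj_action_def coord_on_mult_mat_vec[of "?N ?T" "?N ?S"])
    next
      case (Some d)
      hence d: "d \<in> arrs Q" "src Q d = v" "tgt Q d = ?S" using p by auto
      have "coord_on (?N ?T) (rmap X c *\<^sub>v (rmap X d *\<^sub>v x)) i = coord_on (?N ?T) ((rmap X c * rmap X d) *\<^sub>v x) i"
        using Xc[OF c] Xc[OF d(1)] d x by (simp add: assoc_mult_mat_vec[of _ _ "rdim X ?S" _ "rdim X v"])
      also have "\<dots> = 0" using X0[OF d(1) c] d x i by simp
      finally show ?thesis unfolding lhs rhs using Some d i x Xc[OF c] Xc[OF d(1)]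
        by (simp add: proj_action_def coord_on_mult_mat_vec[of "?N ?T" "?N ?S"])
    qed
  next
    show "?H ?T * rmap (proj_rep Q v) c \<in> carrier_mat (card (?N ?T)) (card (proj_basis Q v ?S))"
      using mult_carrier_mat[OF proj_rep_hom_carrier mat_on_carrier] by simp
    show "rmap X c * ?H ?S \<in> carrier_mat (card (?N ?T)) (card (proj_basis Q v ?S))"
      using mult_carrier_mat[OF Xc[OF c] proj_rep_hom_carrier] by simp
  qed simp_all
qed simp

lemma entry_on_hom_from_proj_rep:
  fixes Y :: "('v, 'a, 'k::field) rep"
  assumes Y: "is_rep Q Y" and h: "is_hom Q (proj_rep Q v) Y h"
    and d: "d \<in> arrs Q" "src Q d = v" and i: "i < rdim Y (tgt Q d)"
  shows "entry_on {..<rdim Y (tgt Q d)} (proj_basis Q v (tgt Q d)) (h (tgt Q d)) i (Some d)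
    = entry_on {..<rdim Y (tgt Q d)} (proj_basis Q v v) (rmap Y d * h v) i None"
proof -
  let ?T = "tgt Q d" and ?N = "{..<rdim Y (tgt Q d)}"
  have hT: "h ?T \<in> carrier_mat (rdim Y ?T) (card (proj_basis Q v ?T))"
    using h d fq by (auto simp: is_hom_def finite_quiver_def)
  have "entry_on ?N (proj_basis Q v ?T) (h ?T) i (Some d)
      = entry_on ?N (proj_basis Q v v) (h ?T * rmap (proj_rep Q v) d) i None"
    using hT d i by (simp add: entry_on_mult[of _ "proj_basis Q v ?T"] proj_action_def)
  also have "h ?T * rmap (proj_rep Q v) d = rmap Y d * h (src Q d)"
    using h d(1) unfolding is_hom_def by blast
  finally show ?thesis using d(2) by simp
qed

lemma hom_from_proj_rep_eqI:
  fixes Y :: "('v, 'a, 'k::field) rep"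
  assumes Y: "is_rep Q Y" and h1: "is_hom Q (proj_rep Q v) Y h1" and h2: "is_hom Q (proj_rep Q v) Y h2"
    and v: "v \<in> verts Q"
    and agree: "\<And>i. i < rdim Y v \<Longrightarrow>
      entry_on {..<rdim Y v} (proj_basis Q v v) (h1 v) i None = entry_on {..<rdim Y v} (proj_basis Q v v) (h2 v) i None"
  shows "hom_eq Q h1 h2"
  unfolding hom_eq_def
proof
  fix y assume y: "y \<in> verts Q"
  have hc: "h y \<in> carrier_mat (rdim Y y) (card (proj_basis Q v y))"
    if "is_hom Q (proj_rep Q v) Y h" "y \<in> verts Q" for h y
    using that by (simp add: is_hom_def)
  show "h1 y = h2 y"
  proof (rule mat_on_eqI[of "{..<rdim Y y}" "proj_basis Q v y"])
    fix i p assume i: "i \<in> {..<rdim Y y}" and p: "p \<in> proj_basis Q v y"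
    show "entry_on {..<rdim Y y} (proj_basis Q v y) (h1 y) i p = entry_on {..<rdim Y y} (proj_basis Q v y) (h2 y) i p"
    proof (cases p)
      case None thus ?thesis using p i agree by simp
    next
      case (Some d)
      hence d: "d \<in> arrs Q" "src Q d = v" "tgt Q d = y" using p by auto
      have Yd: "rmap Y d \<in> carrier_mat (rdim Y y) (rdim Y v)" using Y d by (auto simp: is_rep_def)
      show ?thesis
        using entry_on_hom_from_proj_rep[OF Y h1 d(1,2)] entry_on_hom_from_proj_rep[OF Y h2 d(1,2)]
          Some d i Yd hc[OF h1 v] hc[OF h2 v] agree
        by (simp add: entry_on_mult[of _ "{..<rdim Y v}"])
    qed
  qed (use hc h1 h2 y in simp_all)
qed

lemma is_projective_proj_rep:
  assumes v: "v \<in> verts Q"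
  shows "is_projective Q (proj_rep Q v :: ('v, 'a, 'k::field) rep)"
  unfolding is_projective_def
proof (intro conjI allI impI is_rep_proj_rep)
  fix X Y :: "('v, 'a, 'k) rep" and g h
  assume "is_rep Q X \<and> is_rep Q Y \<and> is_hom Q X Y g \<and> hom_surjective Q X Y g \<and> is_hom Q (proj_rep Q v) Y h"
  hence X: "is_rep Q X" and Y: "is_rep Q Y" and g: "is_hom Q X Y g" and surj: "hom_surjective Q X Y g"
    and h: "is_hom Q (proj_rep Q v) Y h" by auto
  have gv: "g v \<in> carrier_mat (rdim Y v) (rdim X v)"
    and hv: "h v \<in> carrier_mat (rdim Y v) (card (proj_basis Q v v))"
    using g h v by (auto simp: is_hom_def)
  define y where "y = col (h v) (set_index (proj_basis Q v v) None)"
  have "y \<in> carrier_vec (rdim Y v)" unfolding y_def using col_dim[of "h v"] hv by simp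
  then obtain x where x: "x \<in> carrier_vec (rdim X v)" and gx: "g v *\<^sub>v x = y"
    using surj v unfolding hom_surjective_def by blast
  let ?H = "proj_rep_hom Q X v x"
  have H: "is_hom Q (proj_rep Q v) X ?H" by (rule is_hom_proj_rep_hom[OF X x])
  have "hom_eq Q (hom_comp g ?H) h"
  proof (rule hom_from_proj_rep_eqI[OF Y is_hom_hom_comp[OF fq is_rep_proj_rep X Y H g] h v])
    fix i assume i: "i < rdim Y v"
    have "entry_on {..<rdim Y v} (proj_basis Q v v) (hom_comp g ?H v) i None
        = coord_on {..<rdim Y v} (g v *\<^sub>v x) i"
      using gv x i by (simp add: hom_comp_def entry_on_mult[of _ "{..<rdim X v}"]
          coord_on_mult_mat_vec[of _ "{..<rdim X v}"])
    also have "\<dots> = entry_on {..<rdim Y v} (proj_basis Q v v) (h v) i None"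
      unfolding gx y_def using hv i by (simp add: coord_on_col[of "{..<rdim Y v}"])
    finally show "entry_on {..<rdim Y v} (proj_basis Q v v) (hom_comp g ?H v) i None
        = entry_on {..<rdim Y v} (proj_basis Q v v) (h v) i None" .
  qed
  thus "\<exists>h'. is_hom Q (proj_rep Q v) X h' \<and> hom_eq Q (hom_comp g h') h" using H by blast
qed


lemma finite_inj_basis [simp]: "finite (inj_basis Q u y)"
  using fq unfolding inj_basis_def finite_quiver_def by auto

lemma is_rep_inj_rep: "is_rep Q (inj_rep Q u :: ('v, 'a, 'k::field) rep)"
  unfolding is_rep_def
proof (intro conjI ballI impI)
  fix a b assume ab: "tgt Q a = src Q b"
  let ?I = "inj_rep Q u :: ('v, 'a, 'k) rep"
  show "rmap ?I b * rmap ?I a = 0\<^sub>m (rdim ?I (tgt Q b)) (rdim ?I (src Q a))"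
  proof (rule mat_on_eqI[of "inj_basis Q u (tgt Q b)" "inj_basis Q u (src Q a)"])
    fix i i' assume "i \<in> inj_basis Q u (tgt Q b)" and "i' \<in> inj_basis Q u (src Q a)"
    moreover have "(\<Sum>j\<in>inj_basis Q u (tgt Q a). inj_action Q u b i j * inj_action Q u a j i') = (0::'k)"
      by (rule sum.neutral) (auto simp: inj_action_def)
    ultimately show "entry_on (inj_basis Q u (tgt Q b)) (inj_basis Q u (src Q a)) (rmap ?I b * rmap ?I a) i i'
      = entry_on (inj_basis Q u (tgt Q b)) (inj_basis Q u (src Q a)) (0\<^sub>m (rdim ?I (tgt Q b)) (rdim ?I (src Q a))) i i'"
      using ab by (simp add: entry_on_mult[of _ "inj_basis Q u (tgt Q a)"])
  qed (use ab in \<open>auto intro!: mult_carrier_mat[OF mat_on_carrier]\<close>)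
qed auto

lemma entry_on_inj_rep_hom [simp]:
  "i \<in> inj_basis Q u w \<Longrightarrow> l < rdim E w \<Longrightarrow>
    entry_on (inj_basis Q u w) {..<rdim E w} (inj_rep_hom Q E u L w) i l =
      (case i of None \<Rightarrow> entry_on (inj_basis Q u u) {..<rdim E u} L None l
       | Some b \<Rightarrow> entry_on (inj_basis Q u u) {..<rdim E w} (L * rmap E b) None l)"
  unfolding inj_rep_hom_def by simp

lemma is_hom_inj_rep_hom:
  fixes E :: "('v, 'a, 'k::field) rep"
  assumes E: "is_rep Q E" and L: "L \<in> carrier_mat (card (inj_basis Q u u)) (rdim E u)"
  shows "is_hom Q E (inj_rep Q u) (inj_rep_hom Q E u L)"
  unfolding is_hom_def
proof (intro conjI ballI)
  fix c assume c: "c \<in> arrs Q"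
  let ?r = "inj_rep_hom Q E u L" and ?S = "src Q c" and ?T = "tgt Q c"
  let ?N = "\<lambda>w. {..<rdim E w}"
  have Ec: "\<And>c. c \<in> arrs Q \<Longrightarrow> rmap E c \<in> carrier_mat (rdim E (tgt Q c)) (rdim E (src Q c))"
    and E0: "\<And>a b. a \<in> arrs Q \<Longrightarrow> b \<in> arrs Q \<Longrightarrow> tgt Q a = src Q b \<Longrightarrow>
        rmap E b * rmap E a = 0\<^sub>m (rdim E (tgt Q b)) (rdim E (src Q a))"
    using E by (simp_all add: is_rep_def)
  show "?r ?T * rmap E c = rmap (inj_rep Q u) c * ?r ?S"
  proof (rule mat_on_eqI[of "inj_basis Q u ?T" "?N ?S"])
    fix i l assume i: "i \<in> inj_basis Q u ?T" and l: "l \<in> ?N ?S"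
    have lhs: "entry_on (inj_basis Q u ?T) (?N ?S) (?r ?T * rmap E c) i l
        = (\<Sum>l'\<in>?N ?T. entry_on (inj_basis Q u ?T) (?N ?T) (?r ?T) i l' * entry_on (?N ?T) (?N ?S) (rmap E c) l' l)"
      using i l Ec[OF c] by (simp add: entry_on_mult[of _ "?N ?T"])
    have rhs: "entry_on (inj_basis Q u ?T) (?N ?S) (rmap (inj_rep Q u) c * ?r ?S) i l
        = (\<Sum>i'\<in>inj_basis Q u ?S. inj_action Q u c i i' * entry_on (inj_basis Q u ?S) (?N ?S) (?r ?S) i' l)"
      using i l by (simp add: entry_on_mult[of _ "inj_basis Q u ?S"])
    show "entry_on (inj_basis Q u ?T) (?N ?S) (?r ?T * rmap E c) i l
        = entry_on (inj_basis Q u ?T) (?N ?S) (rmap (inj_rep Q u) c * ?r ?S) i l"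
    proof (cases i)
      case None
      hence T: "?T = u" using i by simp
      have "entry_on (inj_basis Q u ?T) (?N ?S) (?r ?T * rmap E c) i l
          = entry_on (inj_basis Q u u) (?N ?S) (L * rmap E c) None l"
        unfolding lhs using None T L Ec[OF c] l by (simp add: entry_on_mult[of _ "?N u"])
      thus ?thesis unfolding rhs using None T c l by (simp add: inj_action_def)
    next
      case (Some b)
      hence b: "b \<in> arrs Q" "src Q b = ?T" "tgt Q b = u" using i by auto
      have "entry_on (inj_basis Q u ?T) (?N ?S) (?r ?T * rmap E c) i l
          = entry_on (inj_basis Q u u) (?N ?S) ((L * rmap E b) * rmap E c) None l"
        unfolding lhs using Some b L Ec[OF c] Ec[OF b(1)] l
        by (simp add: entry_on_mult[of _ "?N ?T" _ "L * rmap E b"] del: assoc_mult_mat)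
      also have "(L * rmap E b) * rmap E c = L * (rmap E b * rmap E c)"
        using L Ec[OF c] Ec[OF b(1)] b by (simp add: assoc_mult_mat[of _ _ "rdim E u" _ "rdim E ?T"])
      also have "\<dots> = 0\<^sub>m (card (inj_basis Q u u)) (card (?N ?S))"
        using E0[OF c b(1)] b L by simp
      finally show ?thesis unfolding rhs using Some l by (simp add: inj_action_def)
    qed
  next
    show "?r ?T * rmap E c \<in> carrier_mat (card (inj_basis Q u ?T)) (card (?N ?S))"
      using mult_carrier_mat[OF inj_rep_hom_carrier Ec[OF c]] by simp
    show "rmap (inj_rep Q u) c * ?r ?S \<in> carrier_mat (card (inj_basis Q u ?T)) (card (?N ?S))"
      using mult_carrier_mat[OF mat_on_carrier inj_rep_hom_carrier] by simp
  qed simp_all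
qed simp

lemma inj_rep_hom_retraction:
  fixes E :: "('v, 'a, 'k::field) rep"
  assumes E: "is_rep Q E" and f: "is_hom Q (inj_rep Q u) E f" and u: "u \<in> verts Q"
    and L: "L \<in> carrier_mat (card (inj_basis Q u u)) (rdim E u)" and Lf: "L * f u = 1\<^sub>m (card (inj_basis Q u u))"
    and w: "w \<in> verts Q"
  shows "inj_rep_hom Q E u L w * f w = 1\<^sub>m (card (inj_basis Q u w))"
proof (rule mat_on_eqI[of "inj_basis Q u w" "inj_basis Q u w"])
  let ?r = "inj_rep_hom Q E u L" and ?N = "\<lambda>w. {..<rdim E w}"
  have fc: "\<And>w. w \<in> verts Q \<Longrightarrow> f w \<in> carrier_mat (rdim E w) (card (inj_basis Q u w))"
    using f by (simp add: is_hom_def)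
  have Ec: "\<And>b. b \<in> arrs Q \<Longrightarrow> rmap E b \<in> carrier_mat (rdim E (tgt Q b)) (rdim E (src Q b))"
    using E by (simp add: is_rep_def)
  show "?r w * f w \<in> carrier_mat (card (inj_basis Q u w)) (card (inj_basis Q u w))"
    using mult_carrier_mat[OF inj_rep_hom_carrier fc[OF w]] .
  fix i i' assume i: "i \<in> inj_basis Q u w" and i': "i' \<in> inj_basis Q u w"
  have lhs: "entry_on (inj_basis Q u w) (inj_basis Q u w) (?r w * f w) i i'
      = (\<Sum>l\<in>?N w. entry_on (inj_basis Q u w) (?N w) (?r w) i l * entry_on (?N w) (inj_basis Q u w) (f w) l i')"
    using i i' fc[OF w] by (simp add: entry_on_mult[of _ "?N w"])
  show "entry_on (inj_basis Q u w) (inj_basis Q u w) (?r w * f w) i i'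
      = entry_on (inj_basis Q u w) (inj_basis Q u w) (1\<^sub>m (card (inj_basis Q u w))) i i'"
  proof (cases i)
    case None
    hence wu: "w = u" using i by simp
    have "entry_on (inj_basis Q u w) (inj_basis Q u w) (?r w * f w) i i'
        = entry_on (inj_basis Q u u) (inj_basis Q u u) (L * f u) None i'"
      unfolding lhs using None wu L fc[OF u] i' by (simp add: entry_on_mult[of _ "?N u"])
    thus ?thesis unfolding Lf using None wu i' by simp
  next
    case (Some b)
    hence b: "b \<in> arrs Q" "src Q b = w" "tgt Q b = u" using i by auto
    have "entry_on (inj_basis Q u w) (inj_basis Q u w) (?r w * f w) i i'
        = entry_on (inj_basis Q u u) (inj_basis Q u w) ((L * rmap E b) * f w) None i'"
      unfolding lhs using Some b L fc[OF w] Ec[OF b(1)] i'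
      by (simp add: entry_on_mult[of _ "?N w" _ "L * rmap E b"] del: assoc_mult_mat)
    also have "(L * rmap E b) * f w = L * (rmap E b * f w)"
      using L fc[OF w] Ec[OF b(1)] b by (simp add: assoc_mult_mat[of _ _ "rdim E u" _ "rdim E w"])
    also have "rmap E b * f w = f u * rmap (inj_rep Q u) b"
      using f b unfolding is_hom_def by metis
    also have "L * (f u * rmap (inj_rep Q u) b) = (L * f u) * rmap (inj_rep Q u) b"
      using assoc_mult_mat[OF L fc[OF u], of "rmap (inj_rep Q u) b" "card (inj_basis Q u w)"] b by simp
    also have "\<dots> = mat_on (inj_basis Q u u) (inj_basis Q u w) (inj_action Q u b)"
      unfolding Lf using b by (simp add: left_mult_one_mat[OF mat_on_carrier])
    finally show ?thesis using Some b i' i by (auto simp: inj_action_def)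
  qed
qed simp_all

lemma ext1_zero_inj_rep:
  assumes u: "u \<in> verts Q"
  shows "ext1_zero Q Z (inj_rep Q u :: ('v, 'a, 'k::field) rep)"
  unfolding ext1_zero_def
proof (intro allI impI)
  fix E :: "('v, 'a, 'k) rep" and f g
  assume S: "ses Q (inj_rep Q u) E Z f g"
  hence E: "is_rep Q E" and f: "is_hom Q (inj_rep Q u) E f" and inj: "hom_injective Q (inj_rep Q u) f"
    by (simp_all add: ses_def)
  have fu: "f u \<in> carrier_mat (rdim E u) (card (inj_basis Q u u))"
    using f u by (simp add: is_hom_def)
  obtain L where L: "L \<in> carrier_mat (card (inj_basis Q u u)) (rdim E u)"
    and Lf: "L * f u = 1\<^sub>m (card (inj_basis Q u u))"
    using injective_mat_left_inverse[OF fu] inj u fu unfolding hom_injective_def by auto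
  show "\<exists>s. is_hom Q Z E s \<and> hom_eq Q (hom_comp g s) (hom_id Z)"
    using ses_split_of_retraction[OF fq S is_hom_inj_rep_hom[OF E L]]
      inj_rep_hom_retraction[OF E f u L Lf] by simp
qed


lemma finite_ext_basis [simp]: "finite (ext_basis Q v u y)"
  unfolding ext_basis_def using fq by simp

lemma sum_ext_basis:
  "(\<Sum>x\<in>ext_basis Q v u y. F x) = (\<Sum>p\<in>proj_basis Q v y. F (Inl p)) + (\<Sum>i\<in>inj_basis Q u y. F (Inr i))"
  unfolding ext_basis_def using fq by (subst sum.union_disjoint) (auto simp: sum.reindex)

lemma is_rep_ext_rep: "is_rep Q (ext_rep Q v u b0 c0 d0 :: ('v, 'a, 'k::field) rep)"
  unfolding is_rep_def
proof (intro conjI ballI impI)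
  fix a b assume ab: "tgt Q a = src Q b"
  let ?E = "ext_rep Q v u b0 c0 d0 :: ('v, 'a, 'k) rep" and ?B = "ext_basis Q v u"
  show "rmap ?E b * rmap ?E a = 0\<^sub>m (rdim ?E (tgt Q b)) (rdim ?E (src Q a))"
  proof (rule mat_on_eqI[of "?B (tgt Q b)" "?B (src Q a)"])
    fix x x' assume "x \<in> ?B (tgt Q b)" and "x' \<in> ?B (src Q a)"
    moreover have "(\<Sum>y\<in>?B (tgt Q a). ext_action Q v u b0 c0 d0 b x y * ext_action Q v u b0 c0 d0 a y x') = (0::'k)"
      by (rule sum.neutral)
        (auto simp: ext_action_def proj_action_def inj_action_def twist_def split: sum.split)
    ultimately show "entry_on (?B (tgt Q b)) (?B (src Q a)) (rmap ?E b * rmap ?E a) x x'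
      = entry_on (?B (tgt Q b)) (?B (src Q a)) (0\<^sub>m (rdim ?E (tgt Q b)) (rdim ?E (src Q a))) x x'"
      using ab by (simp add: entry_on_mult[of _ "?B (tgt Q a)"])
  qed (use ab in \<open>auto intro!: mult_carrier_mat[OF mat_on_carrier]\<close>)
qed auto

lemma is_hom_ext_incl:
  "is_hom Q (proj_rep Q v) (ext_rep Q v u b0 c0 d0) (ext_incl Q v u :: 'v \<Rightarrow> 'k::field mat)"
  unfolding is_hom_def
proof (intro conjI ballI)
  fix c assume c: "c \<in> arrs Q"
  let ?E = "ext_rep Q v u b0 c0 d0 :: ('v, 'a, 'k) rep"
  let ?B = "ext_basis Q v u" and ?P = "proj_basis Q v" and ?S = "src Q c" and ?T = "tgt Q c"
  show "ext_incl Q v u ?T * rmap (proj_rep Q v) c = rmap ?E c * ext_incl Q v u ?S"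
  proof (rule mat_on_eqI[of "?B ?T" "?P ?S"])
    fix x p assume x: "x \<in> ?B ?T" and p: "p \<in> ?P ?S"
    have "entry_on (?B ?T) (?P ?S) (ext_incl Q v u ?T * rmap (proj_rep Q v) c) x p
       = (\<Sum>p'\<in>?P ?T. (if x = Inl p' then 1 else 0) * proj_action Q v c p' p)"
      using x p unfolding ext_incl_def by (simp add: entry_on_mult[of _ "?P ?T"])
    moreover have "entry_on (?B ?T) (?P ?S) (rmap ?E c * ext_incl Q v u ?S) x p
       = (\<Sum>x'\<in>?B ?S. ext_action Q v u b0 c0 d0 c x x' * (if x' = Inl p then 1 else 0))"
      using x p unfolding ext_incl_def by (simp add: entry_on_mult[of _ "?B ?S"])
    ultimately show "entry_on (?B ?T) (?P ?S) (ext_incl Q v u ?T * rmap (proj_rep Q v) c) x p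
        = entry_on (?B ?T) (?P ?S) (rmap ?E c * ext_incl Q v u ?S) x p"
      using x p by (cases x) auto
  qed (auto simp: ext_incl_def intro!: mult_carrier_mat[OF mat_on_carrier])
qed (simp add: ext_incl_def)

lemma is_hom_ext_proj:
  "is_hom Q (ext_rep Q v u b0 c0 d0) (inj_rep Q u) (ext_proj Q v u :: 'v \<Rightarrow> 'k::field mat)"
  unfolding is_hom_def
proof (intro conjI ballI)
  fix c assume c: "c \<in> arrs Q"
  let ?E = "ext_rep Q v u b0 c0 d0 :: ('v, 'a, 'k) rep"
  let ?B = "ext_basis Q v u" and ?I = "inj_basis Q u" and ?S = "src Q c" and ?T = "tgt Q c"
  show "ext_proj Q v u ?T * rmap ?E c = rmap (inj_rep Q u) c * ext_proj Q v u ?S"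
  proof (rule mat_on_eqI[of "?I ?T" "?B ?S"])
    fix i x assume i: "i \<in> ?I ?T" and x: "x \<in> ?B ?S"
    have "entry_on (?I ?T) (?B ?S) (ext_proj Q v u ?T * rmap ?E c) i x
       = (\<Sum>x'\<in>?B ?T. (if x' = Inr i then 1 else 0) * ext_action Q v u b0 c0 d0 c x' x)"
      using x i unfolding ext_proj_def by (simp add: entry_on_mult[of _ "?B ?T"])
    moreover have "entry_on (?I ?T) (?B ?S) (rmap (inj_rep Q u) c * ext_proj Q v u ?S) i x
       = (\<Sum>i'\<in>?I ?S. inj_action Q u c i i' * (if x = Inr i' then 1 else 0))"
      using x i unfolding ext_proj_def by (simp add: entry_on_mult[of _ "?I ?S"])
    ultimately show "entry_on (?I ?T) (?B ?S) (ext_proj Q v u ?T * rmap ?E c) i x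
        = entry_on (?I ?T) (?B ?S) (rmap (inj_rep Q u) c * ext_proj Q v u ?S) i x"
      using x i by (cases x) auto
  qed (auto simp: ext_proj_def intro!: mult_carrier_mat[OF mat_on_carrier])
qed (simp add: ext_proj_def)

lemma ext_proj_mult_vec:
  "y \<in> carrier_vec (card (ext_basis Q v u w)) \<Longrightarrow> i \<in> inj_basis Q u w \<Longrightarrow>
    coord_on (inj_basis Q u w) (ext_proj Q v u w *\<^sub>v y) i = coord_on (ext_basis Q v u w) y (Inr i)"
  unfolding ext_proj_def by (simp add: coord_on_mat_on_mult_vec)

lemma ext_incl_mult_vec:
  "x \<in> carrier_vec (card (proj_basis Q v w)) \<Longrightarrow> e \<in> ext_basis Q v u w \<Longrightarrow>
    coord_on (ext_basis Q v u w) (ext_incl Q v u w *\<^sub>v x) e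
      = (case e of Inl p \<Rightarrow> coord_on (proj_basis Q v w) x p | Inr _ \<Rightarrow> 0)"
  unfolding ext_incl_def by (cases e) (simp_all add: coord_on_mat_on_mult_vec)

lemma ext_rep_exact:
  fixes y :: "'k::field vec"
  assumes y: "y \<in> carrier_vec (card (ext_basis Q v u w))"
  shows "ext_proj Q v u w *\<^sub>v y = 0\<^sub>v (card (inj_basis Q u w))
    \<longleftrightarrow> (\<exists>x\<in>carrier_vec (card (proj_basis Q v w)). ext_incl Q v u w *\<^sub>v x = y)"
proof
  assume "ext_proj Q v u w *\<^sub>v y = 0\<^sub>v (card (inj_basis Q u w))"
  hence y_Inr: "coord_on (ext_basis Q v u w) y (Inr i) = 0" if "i \<in> inj_basis Q u w" for i
    using ext_proj_mult_vec[OF y that] that by simp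
  let ?x = "vec_on (proj_basis Q v w) (\<lambda>p. coord_on (ext_basis Q v u w) y (Inl p))"
  have "ext_incl Q v u w *\<^sub>v ?x = y"
  proof (rule vec_on_eqI[of "ext_basis Q v u w"])
    show "ext_incl Q v u w *\<^sub>v ?x \<in> carrier_vec (card (ext_basis Q v u w))"
      unfolding ext_incl_def by (rule mult_mat_vec_carrier[OF mat_on_carrier vec_on_carrier])
    fix e assume "e \<in> ext_basis Q v u w"
    thus "coord_on (ext_basis Q v u w) (ext_incl Q v u w *\<^sub>v ?x) e = coord_on (ext_basis Q v u w) y e"
      by (cases e) (simp_all add: ext_incl_mult_vec y_Inr)
  qed (use y in simp_all)
  thus "\<exists>x\<in>carrier_vec (card (proj_basis Q v w)). ext_incl Q v u w *\<^sub>v x = y" by auto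
next
  assume "\<exists>x\<in>carrier_vec (card (proj_basis Q v w)). ext_incl Q v u w *\<^sub>v x = y"
  then obtain x where x: "x \<in> carrier_vec (card (proj_basis Q v w))" and xy: "ext_incl Q v u w *\<^sub>v x = y"
    by blast
  show "ext_proj Q v u w *\<^sub>v y = 0\<^sub>v (card (inj_basis Q u w))"
  proof (rule vec_on_eqI[of "inj_basis Q u w"])
    show "ext_proj Q v u w *\<^sub>v y \<in> carrier_vec (card (inj_basis Q u w))"
      unfolding ext_proj_def by (rule mult_mat_vec_carrier[OF mat_on_carrier y])
    fix i assume i: "i \<in> inj_basis Q u w"
    have "coord_on (ext_basis Q v u w) y (Inr i) = 0"
      using ext_incl_mult_vec[OF x, where e = "Inr i" and u = u] i unfolding xy by simp
    thus "coord_on (inj_basis Q u w) (ext_proj Q v u w *\<^sub>v y) i = coord_on (inj_basis Q u w) (0\<^sub>v (card (inj_basis Q u w))) i"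
      using ext_proj_mult_vec[OF y i] i by simp
  qed simp_all
qed

lemma ses_ext_rep:
  "ses Q (proj_rep Q v) (ext_rep Q v u b0 c0 d0) (inj_rep Q u) (ext_incl Q v u) (ext_proj Q v u :: 'v \<Rightarrow> 'k::field mat)"
  unfolding ses_def
proof (intro conjI is_rep_proj_rep is_rep_ext_rep is_rep_inj_rep is_hom_ext_incl is_hom_ext_proj)
  show "hom_injective Q (proj_rep Q v) (ext_incl Q v u :: 'v \<Rightarrow> 'k mat)"
    unfolding hom_injective_def
  proof (intro ballI impI)
    fix w and x :: "'k vec"
    assume x: "x \<in> carrier_vec (rdim (proj_rep Q v :: ('v, 'a, 'k) rep) w)"
      and "ext_incl Q v u w *\<^sub>v x = 0\<^sub>v (dim_row (ext_incl Q v u w :: 'k mat))"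
    hence "coord_on (proj_basis Q v w) x p = 0" if "p \<in> proj_basis Q v w" for p
      using ext_incl_mult_vec[OF x[simplified], where e = "Inl p" and u = u] that by (simp add: ext_incl_def)
    thus "x = 0\<^sub>v (rdim (proj_rep Q v :: ('v, 'a, 'k) rep) w)"
      by (intro vec_on_eqI[of "proj_basis Q v w"]) (use x in auto)
  qed
  show "hom_surjective Q (ext_rep Q v u b0 c0 d0) (inj_rep Q u) (ext_proj Q v u :: 'v \<Rightarrow> 'k mat)"
    unfolding hom_surjective_def
  proof (intro ballI)
    fix w and z :: "'k vec" assume z: "z \<in> carrier_vec (rdim (inj_rep Q u :: ('v, 'a, 'k) rep) w)"
    let ?y = "vec_on (ext_basis Q v u w) (\<lambda>x. case x of Inl _ \<Rightarrow> 0 | Inr i \<Rightarrow> coord_on (inj_basis Q u w) z i)"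
    have "ext_proj Q v u w *\<^sub>v ?y = z"
    proof (rule vec_on_eqI[of "inj_basis Q u w"])
      show "ext_proj Q v u w *\<^sub>v ?y \<in> carrier_vec (card (inj_basis Q u w))"
        unfolding ext_proj_def by (rule mult_mat_vec_carrier[OF mat_on_carrier vec_on_carrier])
      fix i assume "i \<in> inj_basis Q u w"
      thus "coord_on (inj_basis Q u w) (ext_proj Q v u w *\<^sub>v ?y) i = coord_on (inj_basis Q u w) z i"
        by (simp add: ext_proj_mult_vec[OF vec_on_carrier])
    qed (use z in simp_all)
    thus "\<exists>y\<in>carrier_vec (rdim (ext_rep Q v u b0 c0 d0 :: ('v, 'a, 'k) rep) w). ext_proj Q v u w *\<^sub>v y = z"
      by auto
  qed
qed (simp add: ext_rep_exact)


lemma sum_proj_action_Some: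
  "(\<Sum>p\<in>proj_basis Q v y. proj_action Q v c (Some d) p * F p)
    = (if src Q c = v \<and> d = c \<and> y = v then F None else (0::'k::field))"
proof (cases "src Q c = v \<and> d = c")
  case True
  hence "(\<Sum>p\<in>proj_basis Q v y. proj_action Q v c (Some d) p * F p)
      = (\<Sum>p\<in>proj_basis Q v y. (if p = None then 1 else 0) * F p)"
    by (intro sum.cong refl) (simp add: proj_action_def)
  thus ?thesis using True by simp
qed (auto simp: proj_action_def intro: sum.neutral)

lemma sum_inj_action_Some:
  "(\<Sum>i\<in>inj_basis Q u y. F i * inj_action Q u c i (Some b))
    = (if tgt Q c = u \<and> b = c \<and> y = u then F None else (0::'k::field))"
proof (cases "tgt Q c = u \<and> b = c")
  case True
  hence "(\<Sum>i\<in>inj_basis Q u y. F i * inj_action Q u c i (Some b))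
      = (\<Sum>i\<in>inj_basis Q u y. F i * (if i = None then 1 else 0))"
    by (intro sum.cong refl) (simp add: inj_action_def)
  thus ?thesis using True by simp
qed (auto simp: inj_action_def intro: sum.neutral)

lemma splitting_eqs_of_ext1_zero:
  assumes "ext1_zero Q (inj_rep Q u) (proj_rep Q v :: ('v, 'a, 'k::field) rep)"
  shows "\<exists>\<alpha> \<beta> :: 'a \<Rightarrow> 'k. splitting_eqs Q v u b0 c0 d0 \<alpha> \<beta>"
proof -
  let ?B = "ext_basis Q v u" and ?I = "inj_basis Q u" and ?P = "proj_basis Q v"
  obtain s where s: "is_hom Q (inj_rep Q u) (ext_rep Q v u b0 c0 d0 :: ('v, 'a, 'k) rep) s"
    and gs: "hom_eq Q (hom_comp (ext_proj Q v u) s) (hom_id (inj_rep Q u :: ('v, 'a, 'k) rep))"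
    using assms ses_ext_rep unfolding ext1_zero_def by blast
  have sc: "\<And>w. w \<in> verts Q \<Longrightarrow> s w \<in> carrier_mat (card (?B w)) (card (?I w))"
    using s by (simp add: is_hom_def)
  have s_Inr: "entry_on (?B w) (?I w) (s w) (Inr i') i = (if i' = i then 1 else 0)"
    if w: "w \<in> verts Q" and "i' \<in> ?I w" "i \<in> ?I w" for w i i'
  proof -
    have "entry_on (?B w) (?I w) (s w) (Inr i') i = entry_on (?I w) (?I w) (ext_proj Q v u w * s w) i' i"
      using that sc[OF w] unfolding ext_proj_def by (simp add: entry_on_mult[of _ "?B w"])
    also have "ext_proj Q v u w * s w = 1\<^sub>m (card (?I w))"
      using gs w by (simp add: hom_eq_def hom_comp_def hom_id_def)
    finally show ?thesis using that by simp
  qed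
  define \<psi> where "\<psi> w p i = entry_on (?B w) (?I w) (s w) (Inl p) i" for w p i
  have "splitting_eqs Q v u b0 c0 d0 (\<lambda>b. \<psi> v None (Some b)) (\<lambda>d. \<psi> u (Some d) None)"
    unfolding splitting_eqs_def
  proof (intro ballI impI)
    fix c d b assume c: "c \<in> arrs Q" and d: "d \<in> arrs Q" "src Q d = v" "tgt Q d = tgt Q c"
      and b: "b \<in> arrs Q" "src Q b = src Q c" "tgt Q b = u"
    let ?S = "src Q c" and ?T = "tgt Q c"
    have S: "?S \<in> verts Q" and T: "?T \<in> verts Q" using c fq by (auto simp: finite_quiver_def)
    have dT: "Some d \<in> ?P ?T" and bS: "Some b \<in> ?I ?S" using d b by auto
    have "s ?T * rmap (inj_rep Q u) c = rmap (ext_rep Q v u b0 c0 d0) c * s ?S"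
      using s c by (simp add: is_hom_def)
    hence "entry_on (?B ?T) (?I ?S) (rmap (ext_rep Q v u b0 c0 d0) c * s ?S) (Inl (Some d)) (Some b)
        = entry_on (?B ?T) (?I ?S) (s ?T * rmap (inj_rep Q u) c) (Inl (Some d)) (Some b)" by simp
    moreover have "entry_on (?B ?T) (?I ?S) (rmap (ext_rep Q v u b0 c0 d0) c * s ?S) (Inl (Some d)) (Some b)
        = (if ?S = v \<and> d = c then \<psi> ?S None (Some b) else 0) + (if c = c0 \<and> d = d0 \<and> b = b0 then 1 else 0)"
      using dT bS sc[OF S] s_Inr[OF S _ bS]
      by (simp add: entry_on_mult[of _ "?B ?S"] sum_ext_basis \<psi>_def sum_proj_action_Some twist_def)
    moreover have "entry_on (?B ?T) (?I ?S) (s ?T * rmap (inj_rep Q u) c) (Inl (Some d)) (Some b)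
        = (if ?T = u \<and> b = c then \<psi> ?T (Some d) None else 0)"
      using dT bS sc[OF T] by (simp add: entry_on_mult[of _ "?I ?T"] \<psi>_def sum_inj_action_Some)
    ultimately show "(if ?S = v \<and> d = c then \<psi> v None (Some b) else 0) + (if c = c0 \<and> d = d0 \<and> b = b0 then 1 else 0)
        = (if ?T = u \<and> b = c then \<psi> u (Some d) None else 0)"
      by (auto split: if_splits)
  qed
  thus ?thesis by blast
qed

end

section \<open>The splitting equations are unsolvable\<close>

lemma splitting_eqsD:
  "splitting_eqs Q v u b0 c0 d0 \<alpha> \<beta> \<Longrightarrow> c \<in> arrs Q \<Longrightarrow> d \<in> arrs Q \<Longrightarrow> b \<in> arrs Q \<Longrightarrow>
    src Q d = v \<Longrightarrow> tgt Q d = tgt Q c \<Longrightarrow> src Q b = src Q c \<Longrightarrow> tgt Q b = u \<Longrightarrow>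
    (if src Q c = v \<and> d = c then \<alpha> b else 0) + (if c = c0 \<and> d = d0 \<and> b = b0 then 1 else 0)
      = (if tgt Q c = u \<and> b = c then \<beta> d else 0)"
  unfolding splitting_eqs_def by blast

lemma splitting_eqs_parallel_arrows:
  assumes a: "a \<in> arrs Q" and a': "a' \<in> arrs Q" "a' \<noteq> a" "src Q a' = src Q a" "tgt Q a' = tgt Q a"
  shows "\<not> splitting_eqs Q (src Q a) (tgt Q a) a a' a (\<alpha> :: 'a \<Rightarrow> 'k::field) \<beta>"
proof
  assume eqs: "splitting_eqs Q (src Q a) (tgt Q a) a a' a \<alpha> \<beta>"
  have "a \<noteq> a'" using a'(2) by blast
  thus False
    using splitting_eqsD[OF eqs a'(1) a a refl a'(4)[symmetric] a'(3)[symmetric] refl] by simp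
qed

lemma splitting_eqs_out_and_in_arrows:
  assumes a: "a \<in> arrs Q" and c: "c \<in> arrs Q" "src Q c = src Q a" "tgt Q c \<noteq> tgt Q a"
    and b: "b \<in> arrs Q" "tgt Q b = tgt Q a" "src Q b \<noteq> src Q a"
  shows "\<not> splitting_eqs Q (src Q a) (tgt Q a) a c c (\<alpha> :: 'a \<Rightarrow> 'k::field) \<beta>"
proof
  assume eqs: "splitting_eqs Q (src Q a) (tgt Q a) a c c \<alpha> \<beta>"
  have "c \<noteq> a" "a \<noteq> c" "b \<noteq> c" using c(3) b(2) by auto
  have "\<alpha> a + 1 = 0"
    using splitting_eqsD[OF eqs c(1) c(1) a c(2) refl c(2)[symmetric] refl] c(2,3) by simp
  moreover have "\<alpha> a = \<beta> a"
    using splitting_eqsD[OF eqs a a a refl refl refl refl] \<open>a \<noteq> c\<close> by simp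
  moreover have "0 = \<beta> a"
    using splitting_eqsD[OF eqs b(1) a b(1) refl b(2)[symmetric] refl b(2)] b(2,3) \<open>b \<noteq> c\<close> by simp
  ultimately show False by simp
qed

lemma splitting_eqs_two_in_arrows:
  assumes a: "a \<in> arrs Q" and b1: "b1 \<in> arrs Q" "tgt Q b1 = tgt Q a" "src Q b1 \<noteq> src Q a"
    and b2: "b2 \<in> arrs Q" "tgt Q b2 = tgt Q a" "src Q b2 \<noteq> src Q a" and "b2 \<noteq> b1"
  shows "\<not> splitting_eqs Q (src Q a) (tgt Q a) b1 b1 a (\<alpha> :: 'a \<Rightarrow> 'k::field) \<beta>"
proof
  assume eqs: "splitting_eqs Q (src Q a) (tgt Q a) b1 b1 a \<alpha> \<beta>"
  have "1 = \<beta> a"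
    using splitting_eqsD[OF eqs b1(1) a b1(1) refl b1(2)[symmetric] refl b1(2)] b1(2,3) by simp
  moreover have "0 = \<beta> a"
    using splitting_eqsD[OF eqs b2(1) a b2(1) refl b2(2)[symmetric] refl b2(2)] b2(2,3) \<open>b2 \<noteq> b1\<close>
    by simp
  ultimately show False by simp
qed

lemma splitting_eqs_two_out_arrows:
  assumes a: "a \<in> arrs Q" and c1: "c1 \<in> arrs Q" "src Q c1 = src Q a" "tgt Q c1 \<noteq> tgt Q a"
    and c2: "c2 \<in> arrs Q" "src Q c2 = src Q a" "tgt Q c2 \<noteq> tgt Q a" and "c2 \<noteq> c1"
  shows "\<not> splitting_eqs Q (src Q a) (tgt Q a) a c1 c1 (\<alpha> :: 'a \<Rightarrow> 'k::field) \<beta>"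
proof
  assume eqs: "splitting_eqs Q (src Q a) (tgt Q a) a c1 c1 \<alpha> \<beta>"
  have "\<alpha> a + 1 = 0"
    using splitting_eqsD[OF eqs c1(1) c1(1) a c1(2) refl c1(2)[symmetric] refl] c1(2,3) by simp
  moreover have "\<alpha> a = 0"
    using splitting_eqsD[OF eqs c2(1) c2(1) a c2(2) refl c2(2)[symmetric] refl] c2(2,3) \<open>c2 \<noteq> c1\<close>
    by simp
  ultimately show False by simp
qed

lemma out_deg_eq_Suc_card:
  "finite (arrs Q) \<Longrightarrow> a \<in> arrs Q \<Longrightarrow>
    out_deg Q (src Q a) = Suc (card ({c \<in> arrs Q. src Q c = src Q a} - {a}))"
  unfolding out_deg_def by (rule card_Suc_Diff1[symmetric]) auto

lemma in_deg_eq_Suc_card: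
  "finite (arrs Q) \<Longrightarrow> a \<in> arrs Q \<Longrightarrow>
    in_deg Q (tgt Q a) = Suc (card ({b \<in> arrs Q. tgt Q b = tgt Q a} - {a}))"
  unfolding in_deg_def by (rule card_Suc_Diff1[symmetric]) auto

lemma two_distinct_elements:
  assumes "finite A" "Suc (Suc 0) \<le> card A"
  obtains x y where "x \<in> A" "y \<in> A" "x \<noteq> y"
proof -
  have "\<not> card A \<le> Suc 0" using assms(2) by simp
  thus ?thesis using that card_le_Suc0_iff_eq[OF assms(1)] by blast
qed

lemma splitting_eqs_unsolvable:
  fixes Q :: "('v, 'a) quiver"
  assumes fq: "finite_quiver Q" and a: "a \<in> arrs Q"
    and deg: "4 \<le> out_deg Q (src Q a) + in_deg Q (tgt Q a)"
  shows "\<exists>b0 c0 d0. \<forall>\<alpha> \<beta> :: 'a \<Rightarrow> 'k::field. \<not> splitting_eqs Q (src Q a) (tgt Q a) b0 c0 d0 \<alpha> \<beta>"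
proof (cases "\<exists>a'\<in>arrs Q. a' \<noteq> a \<and> src Q a' = src Q a \<and> tgt Q a' = tgt Q a")
  case True
  then obtain a' where "a' \<in> arrs Q" "a' \<noteq> a" "src Q a' = src Q a" "tgt Q a' = tgt Q a" by blast
  hence "\<forall>\<alpha> \<beta> :: 'a \<Rightarrow> 'k. \<not> splitting_eqs Q (src Q a) (tgt Q a) a a' a \<alpha> \<beta>"
    using splitting_eqs_parallel_arrows[OF a] by blast
  thus ?thesis by blast
next
  case no_parallel: False
  define Out where "Out = {c \<in> arrs Q. src Q c = src Q a} - {a}"
  define In where "In = {b \<in> arrs Q. tgt Q b = tgt Q a} - {a}"
  have out: "\<And>c. c \<in> Out \<Longrightarrow> c \<in> arrs Q \<and> src Q c = src Q a \<and> tgt Q c \<noteq> tgt Q a"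
    and "in": "\<And>b. b \<in> In \<Longrightarrow> b \<in> arrs Q \<and> tgt Q b = tgt Q a \<and> src Q b \<noteq> src Q a"
    using no_parallel unfolding Out_def In_def by auto
  have fin_arrs: "finite (arrs Q)" using fq by (simp add: finite_quiver_def)
  hence fin: "finite Out" "finite In" unfolding Out_def In_def by simp_all
  have card: "2 \<le> card Out + card In"
    using deg out_deg_eq_Suc_card[OF fin_arrs a] in_deg_eq_Suc_card[OF fin_arrs a]
    unfolding Out_def In_def by simp
  have "(Out \<noteq> {} \<and> In \<noteq> {}) \<or> Suc (Suc 0) \<le> card In \<or> Suc (Suc 0) \<le> card Out"
    using card by (cases "Out = {}"; cases "In = {}") simp_all
  then consider "Out \<noteq> {}" "In \<noteq> {}" | "Suc (Suc 0) \<le> card In" | "Suc (Suc 0) \<le> card Out"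
    by blast
  thus ?thesis
  proof cases
    case 1
    then obtain c b where "c \<in> Out" "b \<in> In" by blast
    with out "in" have "\<forall>\<alpha> \<beta> :: 'a \<Rightarrow> 'k. \<not> splitting_eqs Q (src Q a) (tgt Q a) a c c \<alpha> \<beta>"
      using splitting_eqs_out_and_in_arrows[OF a] by meson
    thus ?thesis by blast
  next
    case 2
    then obtain b1 b2 where "b1 \<in> In" "b2 \<in> In" "b2 \<noteq> b1" using two_distinct_elements fin by metis
    with "in" have "\<forall>\<alpha> \<beta> :: 'a \<Rightarrow> 'k. \<not> splitting_eqs Q (src Q a) (tgt Q a) b1 b1 a \<alpha> \<beta>"
      using splitting_eqs_two_in_arrows[OF a] by meson
    thus ?thesis by blast
  next
    case 3
    then obtain c1 c2 where "c1 \<in> Out" "c2 \<in> Out" "c2 \<noteq> c1" using two_distinct_elements fin by metis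
    with out have "\<forall>\<alpha> \<beta> :: 'a \<Rightarrow> 'k. \<not> splitting_eqs Q (src Q a) (tgt Q a) a c1 c1 \<alpha> \<beta>"
      using splitting_eqs_two_out_arrows[OF a] by meson
    thus ?thesis by blast
  qed
qed

theorem corollary2p5:
  fixes Q :: "('v, 'a) quiver" and n :: nat and \<C> :: "('v, 'a, 'k::field) rep set"
  assumes "finite_quiver Q" and "quiver_connected Q" and "n \<ge> 2"
    and "n_cluster_tilting Q n \<C>"
  shows "\<forall>a\<in>arrs Q. out_deg Q (src Q a) + in_deg Q (tgt Q a) \<le> 3"
proof (rule ballI, rule ccontr)
  fix a assume a: "a \<in> arrs Q" and "\<not> out_deg Q (src Q a) + in_deg Q (tgt Q a) \<le> 3"
  hence deg: "4 \<le> out_deg Q (src Q a) + in_deg Q (tgt Q a)" by simp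
  have fq: "finite_quiver Q" by fact
  have v: "src Q a \<in> verts Q" and u: "tgt Q a \<in> verts Q" using a fq by (auto simp: finite_quiver_def)
  obtain b0 c0 d0 where unsolvable: "\<And>\<alpha> \<beta> :: 'a \<Rightarrow> 'k. \<not> splitting_eqs Q (src Q a) (tgt Q a) b0 c0 d0 \<alpha> \<beta>"
    using splitting_eqs_unsolvable[OF fq a deg] by blast
  have "ext1_zero Q (inj_rep Q (tgt Q a)) (proj_rep Q (src Q a) :: ('v, 'a, 'k) rep)"
    using cluster_tilting_ext1_zero[OF assms(4,3) is_projective_proj_rep[OF fq v]
        is_rep_inj_rep[OF fq] ext1_zero_inj_rep[OF fq u]] .
  thus False using splitting_eqs_of_ext1_zero[OF fq] unsolvable by blast
qed

end
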